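(* Let $A$ be a finitely generated associative $\mathbb{C}$-algebra which is NC-nilpotent, let $\pi:A\to A/M_2(A)$ be the quotient map, let $\bar S\subset A/M_2(A)$ be a finitely generated multiplicative set without zero divisors, and let $S=\pi^{-1}(\bar S)$. Then (1) $S$ satisfies the Ore condition; (2) the Ore localization $A[S^{-1}]$ is finitely generated; (3) $A[S^{-1}]$ is NC-nilpotent.
   Context: $L_1=A$, $L_k=[A,L_{k-1}]$, $M_k=AL_kA$. An algebra is NC-nilpotent if its NC-filtration $F_k=\sum_{m\ge1}\sum_{i_1+\cdots+i_m=k+m}M_{i_1}\cdots M_{i_m}$ satisfies $F_N=0$ for some $N$; for finitely generated algebras this is equivalent to $M_N=0$ for some $N$. *)

theory Defs
  imports "HOL-Algebra.Algebra"
begin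

definition C_ring :: "complex ring" where
  "C_ring = \<lparr>carrier = UNIV, monoid.mult = (*), monoid.one = 1, ring.zero = 0, ring.add = (+)\<rparr>"

definition cx_algebra :: "(complex, 'a) module \<Rightarrow> bool" where
  "cx_algebra A \<longleftrightarrow> ring A \<and> module C_ring A \<and>
     (\<forall>c x y. x \<in> carrier A \<longrightarrow> y \<in> carrier A \<longrightarrow>
        (smult A c x) \<otimes>\<^bsub>A\<^esub> y = smult A c (x \<otimes>\<^bsub>A\<^esub> y) \<and>
        x \<otimes>\<^bsub>A\<^esub> (smult A c y) = smult A c (x \<otimes>\<^bsub>A\<^esub> y))"

definition cspan :: "(complex, 'a) module \<Rightarrow> 'a set \<Rightarrow> 'a set" where
  "cspan A Y = {z. \<forall>V. (Y \<subseteq> V \<and> V \<subseteq> carrier A \<and> \<zero>\<^bsub>A\<^esub> \<in> V \<and>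
      (\<forall>x\<in>V. \<forall>y\<in>V. x \<oplus>\<^bsub>A\<^esub> y \<in> V) \<and> (\<forall>c x. x \<in> V \<longrightarrow> smult A c x \<in> V))
      \<longrightarrow> z \<in> V}"

definition lprod :: "('a, 'b) monoid_scheme \<Rightarrow> 'a list \<Rightarrow> 'a" where
  "lprod R xs = foldr (monoid.mult R) xs (monoid.one R)"

definition comm :: "(complex, 'a) module \<Rightarrow> 'a \<Rightarrow> 'a \<Rightarrow> 'a" where
  "comm A x y = x \<otimes>\<^bsub>A\<^esub> y \<ominus>\<^bsub>A\<^esub> y \<otimes>\<^bsub>A\<^esub> x"

text \<open>The value at 0 is an irrelevant dummy.\<close>
fun Lc :: "(complex, 'a) module \<Rightarrow> nat \<Rightarrow> 'a set" where
  "Lc A 0 = carrier A"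
| "Lc A (Suc 0) = carrier A"
| "Lc A (Suc (Suc k)) =
     cspan A {comm A a l | a l. a \<in> carrier A \<and> l \<in> Lc A (Suc k)}"

definition Mc :: "(complex, 'a) module \<Rightarrow> nat \<Rightarrow> 'a set" where
  "Mc A k = cspan A {a \<otimes>\<^bsub>A\<^esub> l \<otimes>\<^bsub>A\<^esub> b | a l b.
                        a \<in> carrier A \<and> l \<in> Lc A k \<and> b \<in> carrier A}"

definition NCF :: "(complex, 'a) module \<Rightarrow> nat \<Rightarrow> 'a set" where
  "NCF A k = cspan A {lprod A xs | xs. xs \<noteq> [] \<and>
      (\<exists>is. length is = length xs \<and> sum_list is = k + length xs \<and>
         (\<forall>j < length xs. 1 \<le> is ! j \<and> xs ! j \<in> Mc A (is ! j)))}"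

definition nc_nilpotent :: "(complex, 'a) module \<Rightarrow> bool" where
  "nc_nilpotent A \<longleftrightarrow> (\<exists>N. NCF A N = {\<zero>\<^bsub>A\<^esub>})"

definition fg_algebra :: "(complex, 'a) module \<Rightarrow> bool" where
  "fg_algebra A \<longleftrightarrow> (\<exists>G. finite G \<and> G \<subseteq> carrier A \<and>
      carrier A = cspan A {lprod A xs | xs. set xs \<subseteq> G})"

definition fg_mult_set :: "('a, 'b) ring_scheme \<Rightarrow> 'a set \<Rightarrow> bool" where
  "fg_mult_set R T \<longleftrightarrow> (\<exists>G. finite G \<and> G \<subseteq> carrier R \<and>
      T = {lprod R xs | xs. set xs \<subseteq> G})"

definition no_zero_divisors_in :: "('a, 'b) ring_scheme \<Rightarrow> 'a set \<Rightarrow> bool" where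
  "no_zero_divisors_in R T \<longleftrightarrow> (\<forall>s\<in>T. \<forall>x\<in>carrier R.
      (s \<otimes>\<^bsub>R\<^esub> x = \<zero>\<^bsub>R\<^esub> \<or> x \<otimes>\<^bsub>R\<^esub> s = \<zero>\<^bsub>R\<^esub>) \<longrightarrow> x = \<zero>\<^bsub>R\<^esub>)"

definition right_ore :: "(complex, 'a) module \<Rightarrow> 'a set \<Rightarrow> bool" where
  "right_ore A S \<longleftrightarrow> (\<forall>a\<in>carrier A. \<forall>s\<in>S. \<exists>t\<in>S. \<exists>b\<in>carrier A.
      a \<otimes>\<^bsub>A\<^esub> t = s \<otimes>\<^bsub>A\<^esub> b)"

definition ore_localization ::
  "(complex, 'a) module \<Rightarrow> 'a set \<Rightarrow> (complex, 'b) module \<Rightarrow> ('a \<Rightarrow> 'b) \<Rightarrow> bool" where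
  "ore_localization A S B \<phi> \<longleftrightarrow> cx_algebra B \<and> \<phi> \<in> ring_hom A B \<and>
     (\<forall>c. \<forall>x\<in>carrier A. \<phi> (smult A c x) = smult B c (\<phi> x)) \<and>
     (\<forall>s\<in>S. \<phi> s \<in> Units B) \<and>
     (\<forall>y\<in>carrier B. \<exists>a\<in>carrier A. \<exists>s\<in>S. y = \<phi> a \<otimes>\<^bsub>B\<^esub> inv\<^bsub>B\<^esub> (\<phi> s)) \<and>
     (\<forall>a\<in>carrier A. \<phi> a = \<zero>\<^bsub>B\<^esub> \<longleftrightarrow> (\<exists>s\<in>S. a \<otimes>\<^bsub>A\<^esub> s = \<zero>\<^bsub>A\<^esub>))"

end

theory Submission
  imports Defs
begin

text \<open>
  In an algebra with \<open>F\<^sub>N = 0\<close> every element \<open>t\<close> is ad-nilpotent, since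
  \<open>ad\<^sub>t\<^sup>k(x) \<in> F\<^sub>k\<close>. Consequently \<open>x t\<^sup>N \<in> t J\<close> for every two-sided ideal subspace
  \<open>J \<ni> x\<close>, and \<open>s y = 0\<close> forces \<open>y s\<^sup>N = 0\<close>; so every multiplicative set is a right
  denominator set, and the Ore
  localization exists as an algebra of fractions \<open>a s\<^sup>-\<^sup>1\<close>.

  In any Ore localization \<open>\<phi> : A \<rightarrow> B\<close>, the subspaces \<open>\<phi>(F\<^sub>k) \<phi>(S)\<^sup>-\<^sup>1\<close> satisfy the
  closure properties that characterize the NC-filtration of \<open>B\<close> as the least such filtration,
  so \<open>F\<^sub>N(B) \<subseteq> \<phi>(F\<^sub>N) \<phi>(S)\<^sup>-\<^sup>1 = 0\<close>.

  Every \<open>s \<in> S\<close> is \<open>m + s\<^sub>0\<close> with \<open>m \<in> M\<^sub>2 \<subseteq> F\<^sub>1\<close> and \<open>s\<^sub>0\<close> a product of lifts of the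
  generators of \<open>Sbar\<close> in \<open>A/M\<^sub>2\<close>. Then \<open>\<phi>(s)\<^sup>-\<^sup>1\<close> is a finite geometric series in the
  nilpotent element \<open>-\<phi>(s\<^sub>0)\<^sup>-\<^sup>1\<phi>(m)\<close> times \<open>\<phi>(s\<^sub>0)\<^sup>-\<^sup>1\<close>, so \<open>B\<close> is generated by the
  images of generators of \<open>A\<close> and the inverses of the finitely many lifts.
\<close>

lemma C_ring_simps [simp]:
  "carrier C_ring = UNIV" "ring.add C_ring = (+)" "monoid.mult C_ring = (*)"
  "monoid.one C_ring = 1" "ring.zero C_ring = 0"
  by (simp_all add: C_ring_def)

lemma sum_list_ge_length:
  "\<forall>j < length ns. 1 \<le> ns ! j \<Longrightarrow> length ns \<le> sum_list (ns :: nat list)"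
proof (induction ns)
  case (Cons i ns)
  have "1 \<le> i" "\<forall>j < length ns. 1 \<le> ns ! j" using Cons.prems by force+
  then show ?case using Cons.IH by simp
qed simp

context monoid
begin

lemma lprod_Nil [simp]: "lprod G [] = \<one>"
  by (simp add: lprod_def)

lemma lprod_Cons [simp]: "lprod G (x # xs) = x \<otimes> lprod G xs"
  by (simp add: lprod_def)

lemma lprod_closed [simp]: "set xs \<subseteq> carrier G \<Longrightarrow> lprod G xs \<in> carrier G"
  by (induction xs) auto

lemma lprod_append:
  "set xs \<subseteq> carrier G \<Longrightarrow> set ys \<subseteq> carrier G \<Longrightarrow> lprod G (xs @ ys) = lprod G xs \<otimes> lprod G ys"
  by (induction xs) (auto simp: m_assoc)

lemma mult_eq_trans_expand:
  assumes "u \<otimes> b = u' \<otimes> b'" "u' \<otimes> c' = u'' \<otimes> c''" "b' \<otimes> x \<otimes> t = c' \<otimes> y \<otimes> t"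
    and "u \<in> carrier G" "u' \<in> carrier G" "u'' \<in> carrier G" "b \<in> carrier G" "b' \<in> carrier G"
    "c' \<in> carrier G" "c'' \<in> carrier G" "x \<in> carrier G" "y \<in> carrier G" "t \<in> carrier G"
  shows "u \<otimes> (b \<otimes> x \<otimes> t) = u'' \<otimes> (c'' \<otimes> y \<otimes> t)"
proof -
  note car = assms(4-13)
  have "u \<otimes> (b \<otimes> x \<otimes> t) = (u \<otimes> b) \<otimes> x \<otimes> t" using car by (simp add: m_assoc)
  also have "\<dots> = (u' \<otimes> b') \<otimes> x \<otimes> t" using assms(1) by simp
  also have "\<dots> = u' \<otimes> (b' \<otimes> x \<otimes> t)" using car by (simp add: m_assoc)
  also have "\<dots> = u' \<otimes> (c' \<otimes> y \<otimes> t)" using assms(3) by simp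
  also have "\<dots> = (u' \<otimes> c') \<otimes> y \<otimes> t" using car by (simp add: m_assoc)
  also have "\<dots> = (u'' \<otimes> c'') \<otimes> y \<otimes> t" using assms(2) by simp
  also have "\<dots> = u'' \<otimes> (c'' \<otimes> y \<otimes> t)" using car by (simp add: m_assoc)
  finally show ?thesis .
qed

end

lemma ring_hom_lprod:
  assumes "h \<in> ring_hom R T" "monoid R" "monoid T" "set xs \<subseteq> carrier R"
  shows "h (lprod R xs) = lprod T (map h xs)"
  using assms(4) by (induction xs)
    (simp_all add: ring_hom_one[OF assms(1)] ring_hom_mult[OF assms(1)] monoid.lprod_closed[OF assms(2)]
      monoid.lprod_Cons[OF assms(2)] monoid.lprod_Cons[OF assms(3)] monoid.lprod_Nil[OF assms(2)]
        monoid.lprod_Nil[OF assms(3)])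

fun geom_sum :: "('a,'b) ring_scheme \<Rightarrow> 'a \<Rightarrow> nat \<Rightarrow> 'a" where
  "geom_sum R q 0 = \<zero>\<^bsub>R\<^esub>" | "geom_sum R q (Suc n) = \<one>\<^bsub>R\<^esub> \<oplus>\<^bsub>R\<^esub> q \<otimes>\<^bsub>R\<^esub> geom_sum R q n"

context ring
begin

lemma geom_sum_closed: "q \<in> carrier R \<Longrightarrow> geom_sum R q n \<in> carrier R" by (induction n) auto

lemma one_minus_mult_geom_sum: "q \<in> carrier R \<Longrightarrow> (\<one> \<ominus> q) \<otimes> geom_sum R q n = \<one> \<ominus> q [^] n"
proof (induction n)
  case 0 then show ?case by (simp add: minus_eq r_neg)
next
  case (Suc n)
  have g: "geom_sum R q n \<in> carrier R" using geom_sum_closed Suc by auto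
  have qc: "\<one> \<ominus> q \<in> carrier R" "q [^] n \<in> carrier R" using Suc by auto
  have cq: "(\<one> \<ominus> q) \<otimes> q = q \<otimes> (\<one> \<ominus> q)" using Suc by (simp add: minus_eq l_distr r_distr l_minus r_minus)
  have "(\<one> \<ominus> q) \<otimes> geom_sum R q (Suc n) = (\<one> \<ominus> q) \<oplus> ((\<one> \<ominus> q) \<otimes> q) \<otimes> geom_sum R q n"
    using Suc.prems g qc by (simp add: r_distr m_assoc)
  also have "\<dots> = (\<one> \<ominus> q) \<oplus> q \<otimes> ((\<one> \<ominus> q) \<otimes> geom_sum R q n)" using cq Suc.prems g qc by (simp add: m_assoc)
  also have "\<dots> = (\<one> \<ominus> q) \<oplus> q \<otimes> (\<one> \<ominus> q [^] n)" using Suc.IH Suc.prems by simp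
  also have "\<dots> = (\<one> \<ominus> q) \<oplus> (q \<ominus> q \<otimes> q [^] n)" using Suc.prems qc by (simp add: minus_eq r_distr r_minus)
  also have "\<dots> = \<one> \<ominus> q \<otimes> q [^] n" using Suc.prems qc by (simp add: minus_eq a_assoc r_neg1)
  also have "\<dots> = \<one> \<ominus> q [^] Suc n" using nat_pow_Suc2[OF Suc.prems] by simp
  finally show ?case .
qed

end

section \<open>The NC-filtration of a complex algebra\<close>

locale complex_algebra = ring A for A :: "(complex,'a) module" (structure) +
  assumes is_cx_algebra: "cx_algebra A"
begin

lemma cx_module: "module C_ring A" using is_cx_algebra unfolding cx_algebra_def by auto
lemma smult_closed[simp]: "x \<in> carrier A \<Longrightarrow> c \<odot>\<^bsub>A\<^esub> x \<in> carrier A"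
  using module.smult_closed[OF cx_module] by simp
lemma smult_mult_left: "x \<in> carrier A \<Longrightarrow> y \<in> carrier A \<Longrightarrow> (c \<odot>\<^bsub>A\<^esub> x) \<otimes> y = c \<odot>\<^bsub>A\<^esub> (x \<otimes> y)"
  using is_cx_algebra unfolding cx_algebra_def by auto
lemma smult_mult_right: "x \<in> carrier A \<Longrightarrow> y \<in> carrier A \<Longrightarrow> x \<otimes> (c \<odot>\<^bsub>A\<^esub> y) = c \<odot>\<^bsub>A\<^esub> (x \<otimes> y)"
  using is_cx_algebra unfolding cx_algebra_def by auto
lemma smult_add: "x \<in> carrier A \<Longrightarrow> y \<in> carrier A \<Longrightarrow> c \<odot>\<^bsub>A\<^esub> (x \<oplus> y) = c \<odot>\<^bsub>A\<^esub> x \<oplus> c \<odot>\<^bsub>A\<^esub> y"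
  using module.smult_r_distr[OF cx_module] by simp
lemma a_inv_eq_smult: "x \<in> carrier A \<Longrightarrow> \<ominus> x = (\<ominus>\<^bsub>C_ring\<^esub> 1) \<odot>\<^bsub>A\<^esub> x"
  using module.smult_l_minus[OF cx_module, of 1 x] module.smult_one[OF cx_module, of x] by simp
lemma smult_minus: "x \<in> carrier A \<Longrightarrow> y \<in> carrier A \<Longrightarrow> c \<odot>\<^bsub>A\<^esub> (x \<ominus> y) = c \<odot>\<^bsub>A\<^esub> x \<ominus> c \<odot>\<^bsub>A\<^esub> y"
  using module.smult_r_minus[OF cx_module, of c y] smult_add by (simp add: minus_eq)

definition subspace :: "'a set \<Rightarrow> bool" where
  "subspace V \<longleftrightarrow> V \<subseteq> carrier A \<and> \<zero> \<in> V \<and> (\<forall>x\<in>V. \<forall>y\<in>V. x \<oplus> y \<in> V) \<and> (\<forall>c x. x \<in> V \<longrightarrow> c \<odot>\<^bsub>A\<^esub> x \<in> V)"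

lemma subspaceD: assumes "subspace V"
  shows "V \<subseteq> carrier A" "\<zero> \<in> V" "x \<in> V \<Longrightarrow> y \<in> V \<Longrightarrow> x \<oplus> y \<in> V" "x \<in> V \<Longrightarrow> c \<odot>\<^bsub>A\<^esub> x \<in> V"
    "x \<in> V \<Longrightarrow> \<ominus> x \<in> V" "x \<in> V \<Longrightarrow> y \<in> V \<Longrightarrow> x \<ominus> y \<in> V"
proof -
  show "V \<subseteq> carrier A" "\<zero> \<in> V" "x \<in> V \<Longrightarrow> y \<in> V \<Longrightarrow> x \<oplus> y \<in> V" "x \<in> V \<Longrightarrow> c \<odot>\<^bsub>A\<^esub> x \<in> V"
    using assms unfolding subspace_def by auto
  show neg: "x \<in> V \<Longrightarrow> \<ominus> x \<in> V" for x using assms a_inv_eq_smult unfolding subspace_def by (metis subsetD)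
  show "x \<in> V \<Longrightarrow> y \<in> V \<Longrightarrow> x \<ominus> y \<in> V" using neg assms unfolding subspace_def minus_eq by blast
qed

lemma subspace_carrier: "subspace (carrier A)" unfolding subspace_def by auto

lemma cspan_least: "Y \<subseteq> V \<Longrightarrow> subspace V \<Longrightarrow> cspan A Y \<subseteq> V"
  unfolding cspan_def subspace_def by blast

lemma cspan_subset_carrier: "Y \<subseteq> carrier A \<Longrightarrow> cspan A Y \<subseteq> carrier A"
  using cspan_least subspace_carrier by blast

lemma cspan_superset: "Y \<subseteq> cspan A Y"
  unfolding cspan_def by blast

lemma subspace_cspan: assumes "Y \<subseteq> carrier A" shows "subspace (cspan A Y)"
  using cspan_subset_carrier[OF assms] unfolding subspace_def cspan_def by auto

lemma cspan_induct: assumes "x \<in> cspan A Y" "Y \<subseteq> carrier A" "subspace {z \<in> carrier A. P z}" "\<And>y. y \<in> Y \<Longrightarrow> P y"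
  shows "P x"
proof -
  have "Y \<subseteq> {z \<in> carrier A. P z}" using assms by auto
  then show ?thesis using cspan_least[OF _ assms(3)] assms(1) by auto
qed

lemma cspan_mult_closed:
  assumes "Y \<subseteq> carrier A" "Z \<subseteq> carrier A" "subspace W" "\<And>y z. y \<in> Y \<Longrightarrow> z \<in> Z \<Longrightarrow> y \<otimes> z \<in> W"
  and "y \<in> cspan A Y" "z \<in> cspan A Z"
  shows "y \<otimes> z \<in> W"
proof -
  note W = subspaceD[OF assms(3)]
  have step: "\<forall>z \<in> cspan A Z. y \<otimes> z \<in> W" if "y \<in> carrier A" "\<And>z. z \<in> Z \<Longrightarrow> y \<otimes> z \<in> W" for y
  proof
    fix z assume z: "z \<in> cspan A Z"
    have "subspace {z \<in> carrier A. y \<otimes> z \<in> W}"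
      unfolding subspace_def using that W by (auto simp: r_distr smult_mult_right)
    then show "y \<otimes> z \<in> W" using cspan_induct[OF z assms(2), of "\<lambda>z. y \<otimes> z \<in> W"] that by auto
  qed
  have "subspace {y \<in> carrier A. \<forall>z \<in> cspan A Z. y \<otimes> z \<in> W}"
    unfolding subspace_def using W cspan_subset_carrier[OF assms(2)] by (auto simp: l_distr smult_mult_left)
  then have "\<forall>z \<in> cspan A Z. y \<otimes> z \<in> W"
    by (rule cspan_induct[OF assms(5) assms(1)]) (use step assms(1,4) in blast)
  then show ?thesis using assms(6) by auto
qed

lemma comm_closed[simp]: "x \<in> carrier A \<Longrightarrow> y \<in> carrier A \<Longrightarrow> comm A x y \<in> carrier A"
  unfolding comm_def by simp

lemma comm_add_right:
  "a \<in> carrier A \<Longrightarrow> x \<in> carrier A \<Longrightarrow> y \<in> carrier A \<Longrightarrow> comm A a (x \<oplus> y) = comm A a x \<oplus> comm A a y"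
  unfolding comm_def by (simp add: r_distr l_distr) algebra

lemma comm_smult_right: "a \<in> carrier A \<Longrightarrow> x \<in> carrier A \<Longrightarrow> comm A a (c \<odot>\<^bsub>A\<^esub> x) = c \<odot>\<^bsub>A\<^esub> comm A a x"
  unfolding comm_def by (simp add: smult_mult_left smult_mult_right smult_minus)

lemma cspan_comm_closed: assumes "Y \<subseteq> carrier A" "subspace W" "a \<in> carrier A" "\<And>y. y \<in> Y \<Longrightarrow> comm A a y \<in> W"
  and "x \<in> cspan A Y" shows "comm A a x \<in> W"
proof -
  note W = subspaceD[OF assms(2)]
  have "subspace {z \<in> carrier A. comm A a z \<in> W}"
    unfolding subspace_def using W assms(3)
      by (auto simp: comm_add_right comm_smult_right) (simp add: comm_def)
  then show ?thesis by (rule cspan_induct[OF assms(5,1)]) (use assms(4) in auto)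
qed

lemma Lc_Suc_subset_carrier: "Lc A (Suc k) \<subseteq> carrier A"
proof (induction k)
  case (Suc k)
  then have "{comm A a l | a l. a \<in> carrier A \<and> l \<in> Lc A (Suc k)} \<subseteq> carrier A" by auto
  then show ?case using cspan_subset_carrier by simp
qed simp

lemma Lc_subset_carrier: "Lc A k \<subseteq> carrier A"
  using Lc_Suc_subset_carrier by (cases k) auto

lemma comm_in_Lc: "a \<in> carrier A \<Longrightarrow> l \<in> Lc A (Suc k) \<Longrightarrow> comm A a l \<in> Lc A (Suc (Suc k))"
  using cspan_superset by fastforce

lemma Mc_generators_subset: "{a \<otimes> l \<otimes> b | a l b. a \<in> carrier A \<and> l \<in> Lc A k \<and> b \<in> carrier A} \<subseteq> carrier A"
  using Lc_subset_carrier by auto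

lemma Mc_generator: "u \<in> carrier A \<Longrightarrow> l \<in> Lc A k \<Longrightarrow> v \<in> carrier A \<Longrightarrow> u \<otimes> l \<otimes> v \<in> Mc A k"
  unfolding Mc_def using cspan_superset by fastforce

lemma Mc_subset_carrier: "Mc A k \<subseteq> carrier A" unfolding Mc_def
  using cspan_subset_carrier[OF Mc_generators_subset] .
lemma subspace_Mc: "subspace (Mc A k)" unfolding Mc_def using subspace_cspan[OF Mc_generators_subset] .

lemma Lc_in_Mc: assumes "l \<in> Lc A k" shows "l \<in> Mc A k"
proof -
  have "l \<in> carrier A" using assms Lc_subset_carrier by auto
  then show ?thesis using Mc_generator[where u=\<one> and l=l and v=\<one> and k=k] assms by simp
qed

lemma set_subset_carrier_if_Mc: assumes "\<forall>j<length xs. xs ! j \<in> Mc A (f j)" shows "set xs \<subseteq> carrier A"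
proof
  fix x assume "x \<in> set xs"
  then obtain j where "j < length xs" "x = xs ! j" by (auto simp: in_set_conv_nth)
  then show "x \<in> carrier A" using assms Mc_subset_carrier by blast
qed

definition NC_generators :: "nat \<Rightarrow> 'a set" where
  "NC_generators k = {lprod A xs | xs. xs \<noteq> [] \<and>
      (\<exists>is. length is = length xs \<and> sum_list is = k + length xs \<and>
         (\<forall>j < length xs. 1 \<le> is ! j \<and> xs ! j \<in> Mc A (is ! j)))}"

lemma NCF_eq_cspan: "NCF A k = cspan A (NC_generators k)" unfolding NCF_def NC_generators_def ..

lemma NC_generators_subset: "NC_generators k \<subseteq> carrier A"
proof
  fix x assume "x \<in> NC_generators k"
  then obtain xs ns where "x = lprod A xs" "length ns = length xs" "\<forall>j < length xs. xs ! j \<in> Mc A (ns ! j)"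
    unfolding NC_generators_def by auto
  then have "set xs \<subseteq> carrier A" using set_subset_carrier_if_Mc by blast
  then show "x \<in> carrier A" using \<open>x = lprod A xs\<close> by simp
qed

lemma NCF_subset_carrier: "NCF A k \<subseteq> carrier A" unfolding NCF_eq_cspan
  using cspan_subset_carrier[OF NC_generators_subset] .
lemma NCF_closed: "f \<in> NCF A k \<Longrightarrow> f \<in> carrier A"
  using NCF_subset_carrier by blast

lemma subspace_NCF: "subspace (NCF A k)" unfolding NCF_eq_cspan
  using subspace_cspan[OF NC_generators_subset] .

lemma carrier_in_Mc_1: "x \<in> carrier A \<Longrightarrow> x \<in> Mc A (Suc 0)"
  using Mc_generator[where u=\<one> and l=x and v=\<one> and k="Suc 0"] by simp

lemma lprod_in_NCF: assumes "length is = length xs" "sum_list is = k + length xs"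
  "\<forall>j < length xs. 1 \<le> is ! j \<and> xs ! j \<in> Mc A (is ! j)"
  shows "lprod A xs \<in> NCF A k"
proof (cases "xs = []")
  case True
  then have k: "k = 0" using assms by simp
  have "lprod A [\<one>] \<in> NC_generators 0" unfolding NC_generators_def
    by (rule CollectI, rule exI[of _ "[\<one>]"]) (auto intro!: exI[of _ "[1]"] carrier_in_Mc_1)
  then show ?thesis using True k cspan_superset unfolding NCF_eq_cspan by fastforce
next
  case False
  then have "lprod A xs \<in> NC_generators k" unfolding NC_generators_def using assms by blast
  then show ?thesis using cspan_superset unfolding NCF_eq_cspan by blast
qed

lemma Mc_Suc_in_NCF: assumes "x \<in> Mc A (Suc k)" shows "x \<in> NCF A k"
proof -
  have "x \<in> carrier A" using assms Mc_subset_carrier by auto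
  then have "lprod A [x] = x" by simp
  moreover have "lprod A [x] \<in> NCF A k" by (rule lprod_in_NCF[of "[Suc k]"]) (use assms in auto)
  ultimately show ?thesis by simp
qed

lemma carrier_in_NCF_0: "x \<in> carrier A \<Longrightarrow> x \<in> NCF A 0"
  using Mc_Suc_in_NCF[of x 0] carrier_in_Mc_1 by simp

lemma NCF_mult: assumes "x \<in> NCF A k" "y \<in> NCF A l" shows "x \<otimes> y \<in> NCF A (k + l)"
proof (rule cspan_mult_closed[OF NC_generators_subset NC_generators_subset subspace_NCF _
    assms[unfolded NCF_eq_cspan]])
  fix u v assume "u \<in> NC_generators k" "v \<in> NC_generators l"
  then obtain xs ns ys js where u: "u = lprod A xs" "length ns = length xs" "sum_list ns = k + length xs"
      "\<forall>j < length xs. 1 \<le> ns ! j \<and> xs ! j \<in> Mc A (ns ! j)"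
    and v: "v = lprod A ys" "length js = length ys" "sum_list js = l + length ys"
      "\<forall>j < length ys. 1 \<le> js ! j \<and> ys ! j \<in> Mc A (js ! j)"
    unfolding NC_generators_def by blast
  have "\<forall>j<length xs. xs ! j \<in> Mc A (ns ! j)" "\<forall>j<length ys. ys ! j \<in> Mc A (js ! j)" using u(4) v(4) by auto
  then have cx: "set xs \<subseteq> carrier A" "set ys \<subseteq> carrier A" using set_subset_carrier_if_Mc by blast+
  have "lprod A (xs @ ys) \<in> NCF A (k + l)"
    by (rule lprod_in_NCF[of "ns @ js"]) (use u v in \<open>auto simp: nth_append\<close>)
  then show "u \<otimes> v \<in> NCF A (k + l)" using lprod_append cx u v by simp
qed

lemma NCF_ideal: "x \<in> NCF A k \<Longrightarrow> a \<in> carrier A \<Longrightarrow> a \<otimes> x \<in> NCF A k \<and> x \<otimes> a \<in> NCF A k"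
proof -
  assume h: "x \<in> NCF A k" "a \<in> carrier A"
  have "a \<otimes> x \<in> NCF A (0 + k)" by (rule NCF_mult[OF carrier_in_NCF_0[OF h(2)] h(1)])
  moreover have "x \<otimes> a \<in> NCF A (k + 0)" by (rule NCF_mult[OF h(1) carrier_in_NCF_0[OF h(2)]])
  ultimately show ?thesis by simp
qed

lemma comm_mult_right: "a \<in> carrier A \<Longrightarrow> x \<in> carrier A \<Longrightarrow> y \<in> carrier A \<Longrightarrow>
   comm A a (x \<otimes> y) = comm A a x \<otimes> y \<oplus> x \<otimes> comm A a y"
  unfolding comm_def by (simp add: r_distr l_distr minus_eq l_minus r_minus m_assoc) algebra

lemma comm_Mc_in_NCF: assumes "a \<in> carrier A" "1 \<le> i" "x \<in> Mc A i" shows "comm A a x \<in> NCF A i"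
proof (rule cspan_comm_closed[OF Mc_generators_subset subspace_NCF assms(1) _ assms(3)[unfolded Mc_def]])
  fix y assume "y \<in> {a \<otimes> l \<otimes> b | a l b. a \<in> carrier A \<and> l \<in> Lc A i \<and> b \<in> carrier A}"
  then obtain u l v where y: "y = u \<otimes> l \<otimes> v" "u \<in> carrier A" "l \<in> Lc A i" "v \<in> carrier A" by blast
  have lc: "l \<in> carrier A" using y Lc_subset_carrier by auto
  obtain i' where i': "i = Suc i'" using assms(2) by (cases i) auto
  have c2: "comm A a z \<in> NCF A 1" if "z \<in> carrier A" for z
  proof -
    have "comm A a z \<in> Lc A 2" using comm_in_Lc[of a z 0] that assms(1) by (simp add: numeral_2_eq_2)
    then show ?thesis using Mc_Suc_in_NCF[of _ 1] Lc_in_Mc by (simp add: numeral_2_eq_2)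
  qed
  have t1: "comm A a u \<otimes> (l \<otimes> v) \<in> NCF A i"
  proof -
    have "l \<otimes> v \<in> NCF A i'" using Mc_Suc_in_NCF Mc_generator[where u=\<one> and l=l and v=v and k=i] y lc i'
      by simp
    then show ?thesis using NCF_mult[OF c2[OF y(2)]] i' by simp
  qed
  have t2: "u \<otimes> comm A a l \<otimes> v \<in> NCF A i"
    using Mc_Suc_in_NCF Mc_generator[where u=u and l="comm A a l" and v=v
      and k="Suc i"] comm_in_Lc[of a l i'] y assms(1) i' by simp
  have t3: "(u \<otimes> l) \<otimes> comm A a v \<in> NCF A i"
  proof -
    have "u \<otimes> l \<in> NCF A i'" using Mc_Suc_in_NCF Mc_generator[where u=u and l=l and v=\<one> and k=i] y lc i'
      by simp
    then show ?thesis using NCF_mult[OF _ c2[OF y(4)]] i' by simp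
  qed
  have "comm A a y = comm A a u \<otimes> (l \<otimes> v) \<oplus> (u \<otimes> comm A a l \<otimes> v \<oplus> (u \<otimes> l) \<otimes> comm A a v)"
    using y lc assms(1) by (simp add: comm_mult_right m_assoc r_distr l_distr)
  then show "comm A a y \<in> NCF A i" using t1 t2 t3 subspaceD[OF subspace_NCF] by simp
qed

lemma comm_one_right: "a \<in> carrier A \<Longrightarrow> comm A a \<one> = \<zero>"
  unfolding comm_def by simp

lemma comm_lprod_in_NCF: assumes a: "a \<in> carrier A"
  shows "\<forall>ns k. length ns = length xs \<and> sum_list ns = k + length xs \<and>
     (\<forall>j < length xs. 1 \<le> ns ! j \<and> xs ! j \<in> Mc A (ns ! j)) \<longrightarrow> comm A a (lprod A xs) \<in> NCF A (Suc k)"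
proof (induction xs)
  case Nil
  then show ?case using comm_one_right[OF a] subspaceD(2)[OF subspace_NCF] by simp
next
  case (Cons x xs)
  show ?case
  proof (intro allI impI)
    fix ns k assume h: "length ns = length (x # xs) \<and> sum_list ns = k + length (x # xs) \<and>
       (\<forall>j < length (x # xs). 1 \<le> ns ! j \<and> (x # xs) ! j \<in> Mc A (ns ! j))"
    obtain i ms where ns: "ns = i # ms" using h by (cases ns) auto
    have hi: "1 \<le> i" "x \<in> Mc A i" using h ns by force+
    have hm: "length ms = length xs" "\<forall>j < length xs. 1 \<le> ms ! j \<and> xs ! j \<in> Mc A (ms ! j)"
      using h ns by force+
    have ge: "length xs \<le> sum_list ms" using sum_list_ge_length[of ms] hm by auto
    define k' where "k' = sum_list ms - length xs"
    have sk: "sum_list ms = k' + length xs" using ge k'_def by simp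
    have ik: "i + k' = Suc k" using h ns sk by simp
    obtain i' where i': "i = Suc i'" using hi by (cases i) auto
    have xs_c: "set xs \<subseteq> carrier A" using hm(2) set_subset_carrier_if_Mc[of xs "\<lambda>j. ms ! j"] by auto
    have xc: "x \<in> carrier A" using hi Mc_subset_carrier by auto
    have L: "lprod A xs \<in> NCF A k'" using lprod_in_NCF[of ms xs k'] hm sk by auto
    have IH: "comm A a (lprod A xs) \<in> NCF A (Suc k')" using Cons.IH hm sk by blast
    have t1: "comm A a x \<otimes> lprod A xs \<in> NCF A (Suc k)"
      using NCF_mult[OF comm_Mc_in_NCF[OF a hi] L] ik by simp
    have t2: "x \<otimes> comm A a (lprod A xs) \<in> NCF A (Suc k)"
      using NCF_mult[OF Mc_Suc_in_NCF[of x i'] IH] hi i' ik by simp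
    have "comm A a (lprod A (x # xs)) = comm A a x \<otimes> lprod A xs \<oplus> x \<otimes> comm A a (lprod A xs)"
      using comm_mult_right[OF a xc lprod_closed[OF xs_c]] by simp
    then show "comm A a (lprod A (x # xs)) \<in> NCF A (Suc k)" using t1 t2 subspaceD(3)[OF subspace_NCF] by simp
  qed
qed

lemma comm_NCF: assumes "a \<in> carrier A" "x \<in> NCF A k" shows "comm A a x \<in> NCF A (Suc k)"
proof (rule cspan_comm_closed[OF NC_generators_subset subspace_NCF assms(1) _
    assms(2)[unfolded NCF_eq_cspan]])
  fix y assume "y \<in> NC_generators k"
  then obtain xs ns where "y = lprod A xs" "length ns = length xs" "sum_list ns = k + length xs"
      "\<forall>j < length xs. 1 \<le> ns ! j \<and> xs ! j \<in> Mc A (ns ! j)" unfolding NC_generators_def by blast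
  then show "comm A a y \<in> NCF A (Suc k)" using comm_lprod_in_NCF[OF assms(1), of xs] by blast
qed

lemma Mc_2_in_NCF_1: "x \<in> Mc A 2 \<Longrightarrow> x \<in> NCF A 1"
  using Mc_Suc_in_NCF[of x 1] by (simp add: numeral_2_eq_2)

lemma ad_pow_in_Lc: "t \<in> carrier A \<Longrightarrow> x \<in> carrier A \<Longrightarrow> ((comm A t) ^^ k) x \<in> Lc A (Suc k)"
proof (induction k)
  case 0 then show ?case by simp
next
  case (Suc k) then show ?case using comm_in_Lc by simp
qed

lemma ad_pow_in_NCF: "t \<in> carrier A \<Longrightarrow> x \<in> carrier A \<Longrightarrow> ((comm A t) ^^ k) x \<in> NCF A k"
  using ad_pow_in_Lc Mc_Suc_in_NCF Lc_in_Mc by blast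

lemma Lc_Suc_subset_filtration:
  assumes sub: "\<And>k. subspace (G k)" and G0: "carrier A \<subseteq> G 0"
    and Gc: "\<And>k y z. y \<in> carrier A \<Longrightarrow> z \<in> G k \<Longrightarrow> comm A y z \<in> G (Suc k)"
  shows "Lc A (Suc k) \<subseteq> G k"
proof (induction k)
  case (Suc k)
  have "{comm A a l | a l. a \<in> carrier A \<and> l \<in> Lc A (Suc k)} \<subseteq> G (Suc k)" using Suc Gc by blast
  then show ?case using cspan_least[OF _ sub] by simp
qed (use G0 in simp)

lemma Mc_Suc_subset_filtration:
  assumes sub: "\<And>k. subspace (G k)" and G0: "carrier A \<subseteq> G 0"
    and Gm: "\<And>k l x y. x \<in> G k \<Longrightarrow> y \<in> G l \<Longrightarrow> x \<otimes> y \<in> G (k + l)"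
    and L: "Lc A (Suc k) \<subseteq> G k"
  shows "Mc A (Suc k) \<subseteq> G k"
proof -
  have "a \<otimes> l \<otimes> b \<in> G k" if "a \<in> carrier A" "l \<in> Lc A (Suc k)" "b \<in> carrier A" for a l b
  proof -
    have "a \<otimes> l \<in> G (0 + k)" using Gm[of a 0 l k] that G0 L by auto
    then have "a \<otimes> l \<otimes> b \<in> G (k + 0)" using Gm[of "a \<otimes> l" k b 0] that G0 by auto
    then show ?thesis by simp
  qed
  then show ?thesis unfolding Mc_def by (intro cspan_least[OF _ sub]) blast
qed

lemma lprod_in_filtration:
  assumes G0: "\<one> \<in> G 0"
    and Gm: "\<And>k l x y. x \<in> G k \<Longrightarrow> y \<in> G l \<Longrightarrow> x \<otimes> y \<in> G (k + l)"
    and M: "\<And>k. Mc A (Suc k) \<subseteq> G k"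
  shows "\<forall>ns k. length ns = length xs \<and> sum_list ns = k + length xs \<and>
     (\<forall>j < length xs. 1 \<le> ns ! j \<and> xs ! j \<in> Mc A (ns ! j)) \<longrightarrow> lprod A xs \<in> G k"
proof (induction xs)
  case (Cons x xs)
  show ?case
  proof (intro allI impI)
    fix ns k assume h: "length ns = length (x # xs) \<and> sum_list ns = k + length (x # xs) \<and>
       (\<forall>j < length (x # xs). 1 \<le> ns ! j \<and> (x # xs) ! j \<in> Mc A (ns ! j))"
    obtain i ms where ns: "ns = i # ms" using h by (cases ns) auto
    have hi: "1 \<le> i" "x \<in> Mc A i" using h ns by force+
    have hm: "length ms = length xs" "\<forall>j < length xs. 1 \<le> ms ! j \<and> xs ! j \<in> Mc A (ms ! j)"
      using h ns by force+
    have ge: "length xs \<le> sum_list ms" using sum_list_ge_length[of ms] hm by auto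
    define k' where "k' = sum_list ms - length xs"
    have sk: "sum_list ms = k' + length xs" using ge k'_def by simp
    obtain i' where i': "i = Suc i'" using hi by (cases i) auto
    have "lprod A xs \<in> G k'" using Cons.IH hm sk by blast
    moreover have "x \<in> G i'" using M hi i' by auto
    ultimately have "x \<otimes> lprod A xs \<in> G (i' + k')" using Gm by blast
    moreover have "i' + k' = k" using h ns sk i' by simp
    ultimately show "lprod A (x # xs) \<in> G k" by simp
  qed
qed (use G0 in simp)

lemma NCF_least: assumes sub: "\<And>k. subspace (G k)" and G0: "carrier A \<subseteq> G 0"
  and Gm: "\<And>k l x y. x \<in> G k \<Longrightarrow> y \<in> G l \<Longrightarrow> x \<otimes> y \<in> G (k + l)"
  and Gc: "\<And>k y z. y \<in> carrier A \<Longrightarrow> z \<in> G k \<Longrightarrow> comm A y z \<in> G (Suc k)"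
  shows "NCF A k \<subseteq> G k"
proof -
  have M: "Mc A (Suc k) \<subseteq> G k" for k
    by (rule Mc_Suc_subset_filtration[OF sub G0 Gm Lc_Suc_subset_filtration[OF sub G0 Gc]])
  have "NC_generators k \<subseteq> G k"
    unfolding NC_generators_def using lprod_in_filtration[OF _ Gm M] G0 by blast
  then show ?thesis unfolding NCF_eq_cspan using cspan_least[OF _ sub] by blast
qed

definition monomials :: "'a set \<Rightarrow> 'a set" where "monomials \<Gamma> = {lprod A xs | xs. set xs \<subseteq> \<Gamma>}"

lemma monomials_subset: "\<Gamma> \<subseteq> carrier A \<Longrightarrow> monomials \<Gamma> \<subseteq> carrier A" unfolding monomials_def by auto

lemma cspan_monomials_mult: assumes "\<Gamma> \<subseteq> carrier A" "x \<in> cspan A (monomials \<Gamma>)" "y \<in> cspan A (monomials \<Gamma>)"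
  shows "x \<otimes> y \<in> cspan A (monomials \<Gamma>)"
proof (rule cspan_mult_closed[OF monomials_subset[OF assms(1)] monomials_subset[OF assms(1)]
    subspace_cspan[OF monomials_subset[OF assms(1)]] _ assms(2,3)])
  fix a b assume "a \<in> monomials \<Gamma>" "b \<in> monomials \<Gamma>"
  then obtain xs ys where "a = lprod A xs" "b = lprod A ys" "set xs \<subseteq> \<Gamma>" "set ys \<subseteq> \<Gamma>" unfolding monomials_def
    by auto
  then have "a \<otimes> b \<in> monomials \<Gamma>" unfolding monomials_def using lprod_append assms(1)
    by (auto intro!: exI[of _ "xs @ ys"])
  then show "a \<otimes> b \<in> cspan A (monomials \<Gamma>)" using cspan_superset by blast
qed

lemma cspan_monomials_gen: "\<Gamma> \<subseteq> carrier A \<Longrightarrow> g \<in> \<Gamma> \<Longrightarrow> g \<in> cspan A (monomials \<Gamma>)"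
proof -
  assume h: "\<Gamma> \<subseteq> carrier A" "g \<in> \<Gamma>"
  then have "lprod A [g] \<in> monomials \<Gamma>" unfolding monomials_def by (intro CollectI exI[of _ "[g]"]) auto
  moreover have "lprod A [g] = g" using h by auto
  ultimately show ?thesis using cspan_superset[of "monomials \<Gamma>"] by auto
qed

lemma cspan_monomials_one: "\<one> \<in> cspan A (monomials \<Gamma>)"
proof -
  have "lprod A [] \<in> monomials \<Gamma>" unfolding monomials_def by (intro CollectI exI[of _ "[]"]) auto
  then show ?thesis using cspan_superset[of "monomials \<Gamma>"] by auto
qed

lemma cspan_monomials_geom_sum: assumes "\<Gamma> \<subseteq> carrier A" "q \<in> cspan A (monomials \<Gamma>)"
  shows "geom_sum A q n \<in> cspan A (monomials \<Gamma>)"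
proof (induction n)
  case 0 then show ?case using subspaceD(2)[OF subspace_cspan[OF monomials_subset[OF assms(1)]]] by simp
next
  case (Suc n) then show ?case
    using subspaceD(3)[OF subspace_cspan[OF monomials_subset[OF assms(1)]]] cspan_monomials_one
      cspan_monomials_mult[OF assms(1,2)] by simp
qed

lemma Mc_mult_closed: assumes "a \<in> carrier A" "x \<in> Mc A k" shows "a \<otimes> x \<in> Mc A k" "x \<otimes> a \<in> Mc A k"
proof -
  have ac: "a \<in> cspan A (carrier A)" using assms cspan_superset by blast
  show "a \<otimes> x \<in> Mc A k" unfolding Mc_def
  proof (rule cspan_mult_closed[OF subset_refl Mc_generators_subset subspace_cspan[OF Mc_generators_subset] _
    ac assms(2)[unfolded Mc_def]])
    fix y z assume "y \<in> carrier A" "z \<in> {a \<otimes> l \<otimes> b | a l b. a \<in> carrier A \<and> l \<in> Lc A k \<and> b \<in> carrier A}"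
    then obtain u l v where z: "z = u \<otimes> l \<otimes> v" "u \<in> carrier A" "l \<in> Lc A k" "v \<in> carrier A" "y \<in> carrier A"
      by blast
    have lc: "l \<in> carrier A" using z(3) Lc_subset_carrier by blast
    have "y \<otimes> z = (y \<otimes> u) \<otimes> l \<otimes> v" using z lc by (simp add: m_assoc)
    then have "y \<otimes> z \<in> Mc A k" using Mc_generator[where u="y \<otimes> u" and l=l and v=v and k=k] z by simp
    then show "y \<otimes> z \<in> cspan A {a \<otimes> l \<otimes> b | a l b. a \<in> carrier A \<and> l \<in> Lc A k \<and> b \<in> carrier A}"
      unfolding Mc_def .
  qed
  show "x \<otimes> a \<in> Mc A k" unfolding Mc_def
  proof (rule cspan_mult_closed[OF Mc_generators_subset subset_refl subspace_cspan[OF Mc_generators_subset] _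
    assms(2)[unfolded Mc_def] ac])
    fix y z assume "z \<in> carrier A" "y \<in> {a \<otimes> l \<otimes> b | a l b. a \<in> carrier A \<and> l \<in> Lc A k \<and> b \<in> carrier A}"
    then obtain u l v where y: "y = u \<otimes> l \<otimes> v" "u \<in> carrier A" "l \<in> Lc A k" "v \<in> carrier A" "z \<in> carrier A"
      by blast
    have lc: "l \<in> carrier A" using y(3) Lc_subset_carrier by blast
    have "y \<otimes> z = u \<otimes> l \<otimes> (v \<otimes> z)" using y lc by (simp add: m_assoc)
    then have "y \<otimes> z \<in> Mc A k" using Mc_generator[where u=u and l=l and v="v \<otimes> z" and k=k] y by simp
    then show "y \<otimes> z \<in> cspan A {a \<otimes> l \<otimes> b | a l b. a \<in> carrier A \<and> l \<in> Lc A k \<and> b \<in> carrier A}"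
      unfolding Mc_def .
  qed
qed

lemma ideal_Mc: "ideal (Mc A k) A"
proof (rule idealI[OF ring_axioms])
  note M = subspaceD[OF subspace_Mc[of k]]
  show "subgroup (Mc A k) (add_monoid A)"
    by (rule subgroup.intro) (use M in \<open>auto simp: a_inv_def[symmetric]\<close>)
qed (use Mc_mult_closed in auto)

definition ideal_subspace :: "'a set \<Rightarrow> bool" where
  "ideal_subspace J \<longleftrightarrow> subspace J \<and> (\<forall>x\<in>J. \<forall>a\<in>carrier A. a \<otimes> x \<in> J \<and> x \<otimes> a \<in> J)"

lemma ideal_subspace_NCF: "ideal_subspace (NCF A k)" unfolding ideal_subspace_def using subspace_NCF NCF_ideal
  by blast
lemma ideal_subspace_carrier: "ideal_subspace (carrier A)" unfolding ideal_subspace_def using subspace_carrier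
  by blast

text \<open>Induction on the ad-nilpotency order of \<open>x\<close>, using \<open>x t = t x - [t, x]\<close>.\<close>
lemma ad_nilpotent_ore: assumes J: "ideal_subspace J" and t: "t \<in> carrier A"
  shows "\<forall>x\<in>J. ((comm A t) ^^ m) x = \<zero> \<longrightarrow> (\<forall>n\<ge>m. \<exists>b\<in>J. x \<otimes> t [^] n = t \<otimes> b)"
proof (induction m)
  have J0: "\<zero> \<in> J" using J unfolding ideal_subspace_def subspace_def by auto
  case 0 show ?case
  proof (intro ballI impI allI)
    fix x and n :: nat assume "x \<in> J" "((comm A t) ^^ 0) x = \<zero>"
    then have "x = \<zero>" by simp
    moreover have "t [^] n \<in> carrier A" using t by simp
    ultimately show "\<exists>b\<in>J. x \<otimes> t [^] n = t \<otimes> b" using J0 t by (intro bexI[of _ \<zero>]) auto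
  qed
next
  case (Suc m)
  show ?case
  proof (intro ballI impI allI)
    fix x n assume x: "x \<in> J" "((comm A t) ^^ Suc m) x = \<zero>" "Suc m \<le> n"
    have xc: "x \<in> carrier A" using x J unfolding ideal_subspace_def subspace_def by auto
    obtain n' where n: "n = Suc n'" "m \<le> n'" using x(3) by (cases n) auto
    have Dx: "comm A t x \<in> J" unfolding comm_def using J x(1) t unfolding ideal_subspace_def
      by (auto intro: subspaceD(6))
    have "((comm A t) ^^ m) (comm A t x) = \<zero>" using x(2) by (simp add: funpow_Suc_right del: funpow.simps)
    then obtain b' where b': "b' \<in> J" "comm A t x \<otimes> t [^] n' = t \<otimes> b'" using Suc.IH Dx n(2) by blast
    have bc: "b' \<in> carrier A" using b' J unfolding ideal_subspace_def subspace_def by auto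
    have tn: "t [^] n' \<in> carrier A" using t by simp
    have pw: "t [^] n = t \<otimes> t [^] n'" by (simp only: n nat_pow_Suc2[OF t])
    have e1: "t \<otimes> (x \<otimes> t [^] n' \<ominus> b') = t \<otimes> x \<otimes> t [^] n' \<ominus> t \<otimes> b'"
      using t xc tn bc by (simp add: minus_eq r_distr r_minus m_assoc)
    have e3: "t \<otimes> x \<otimes> t [^] n' \<ominus> comm A t x \<otimes> t [^] n' = x \<otimes> t [^] n" unfolding comm_def pw using t xc tn
      by algebra
    have e: "x \<otimes> t [^] n = t \<otimes> (x \<otimes> t [^] n' \<ominus> b')" using e1 e3 b'(2) by simp
    have "x \<otimes> t [^] n' \<ominus> b' \<in> J" using J x(1) b'(1) tn unfolding ideal_subspace_def
      by (auto intro: subspaceD(6))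
    then show "\<exists>b\<in>J. x \<otimes> t [^] n = t \<otimes> b" using e by blast
  qed
qed

text \<open>If \<open>s y = 0\<close> then \<open>y s = -[s, y]\<close> and again \<open>s [s, y] = 0\<close>.\<close>
lemma ad_nilpotent_reversible: assumes s: "s \<in> carrier A"
  shows "\<forall>y\<in>carrier A. s \<otimes> y = \<zero> \<and> ((comm A s) ^^ m) y = \<zero> \<longrightarrow> (\<forall>n\<ge>m. y \<otimes> s [^] n = \<zero>)"
proof (induction m)
  case 0 then show ?case using s by auto
next
  case (Suc m)
  show ?case
  proof (intro ballI impI allI)
    fix y n assume y: "y \<in> carrier A" "s \<otimes> y = \<zero> \<and> ((comm A s) ^^ Suc m) y = \<zero>" "Suc m \<le> n"
    obtain n' where n: "n = Suc n'" "m \<le> n'" using y(3) by (cases n) auto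
    have sy: "s \<otimes> y = \<zero>" using y by simp
    have Dc: "comm A s y \<in> carrier A" using s y by simp
    have sD: "s \<otimes> comm A s y = \<zero>"
    proof -
      have "s \<otimes> comm A s y = s \<otimes> (s \<otimes> y) \<ominus> (s \<otimes> y) \<otimes> s" unfolding comm_def
        using s y(1) by (simp add: minus_eq r_distr r_minus m_assoc)
      then show ?thesis using sy s by simp
    qed
    have "((comm A s) ^^ m) (comm A s y) = \<zero>" using y(2) by (simp add: funpow_Suc_right del: funpow.simps)
    then have z: "comm A s y \<otimes> s [^] n' = \<zero>" using Suc.IH Dc sD n(2) by blast
    have pw: "s [^] n = s \<otimes> s [^] n'" by (simp only: n nat_pow_Suc2[OF s])
    have pc: "s [^] n' \<in> carrier A" using s by simp
    have "y \<otimes> s [^] n = (s \<otimes> y \<ominus> comm A s y) \<otimes> s [^] n'" unfolding comm_def pw using s y(1) pc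
      by algebra
    also have "\<dots> = \<ominus> (comm A s y \<otimes> s [^] n')" using sy s Dc by (simp add: minus_eq l_minus)
    finally show "y \<otimes> s [^] n = \<zero>" using z by simp
  qed
qed

end

lemma complex_algebraI: "cx_algebra A \<Longrightarrow> complex_algebra A"
  unfolding complex_algebra_def complex_algebra_axioms_def cx_algebra_def by blast

section \<open>Ore localization at a right denominator set\<close>

locale right_denominator_set = complex_algebra R for R :: "(complex,'a) module" (structure) +
  fixes S :: "'a set"
  assumes S_subset: "S \<subseteq> carrier R" and one_S: "\<one> \<in> S"
    and mult_S: "\<lbrakk>s\<in>S; t\<in>S\<rbrakk> \<Longrightarrow> s \<otimes> t \<in> S"
    and ore_condition: "\<lbrakk>a \<in> carrier R; s \<in> S\<rbrakk> \<Longrightarrow> \<exists>t\<in>S. \<exists>b\<in>carrier R. a \<otimes> t = s \<otimes> b"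
    and reversible: "\<lbrakk>s \<in> S; a \<in> carrier R; s \<otimes> a = \<zero>\<rbrakk> \<Longrightarrow> \<exists>t\<in>S. a \<otimes> t = \<zero>"
begin

lemma S_carrier: "s \<in> S \<Longrightarrow> s \<in> carrier R" using S_subset by auto

lemma common_right_multiple: assumes "s \<in> S" "s' \<in> S"
  shows "\<exists>b\<in>carrier R. \<exists>t\<in>S. s \<otimes> b = s' \<otimes> t \<and> s \<otimes> b \<in> S"
proof -
  obtain t b where t: "t \<in> S" "b \<in> carrier R" "s' \<otimes> t = s \<otimes> b"
    using ore_condition[OF S_carrier[OF assms(2)] assms(1)] by blast
  then show ?thesis using mult_S assms by metis
qed

lemma cancel_left_denominator: assumes "s \<in> S" "x \<in> carrier R" "y \<in> carrier R" "s \<otimes> x = s \<otimes> y"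
  shows "\<exists>t\<in>S. x \<otimes> t = y \<otimes> t"
proof -
  have s: "s \<in> carrier R" using S_carrier assms by auto
  have "s \<otimes> (x \<ominus> y) = \<zero>" using assms s
    by (simp add: minus_eq r_distr r_minus r_neg)
  then obtain t where t: "t \<in> S" "(x \<ominus> y) \<otimes> t = \<zero>" using reversible assms s by blast
  then have "x \<otimes> t \<ominus> y \<otimes> t = \<zero>" using assms S_carrier[OF t(1)]
    by (simp add: minus_eq l_distr l_minus)
  then have "x \<otimes> t = y \<otimes> t" using assms S_carrier[OF t(1)]
    by (metis m_closed minus_equality minus_minus minus_eq a_inv_closed add.inv_closed r_neg)
  with t show ?thesis by blast
qed

text \<open>A pair \<open>(a, s)\<close> stands for the right fraction \<open>a s\<^sup>-\<^sup>1\<close>; two pairs are related when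
  they agree after expansion to a common denominator in \<open>S\<close>.\<close>
definition frac_rel :: "'a \<times> 'a \<Rightarrow> 'a \<times> 'a \<Rightarrow> bool" where
  "frac_rel p q \<longleftrightarrow> (\<exists>b\<in>carrier R. \<exists>b'\<in>carrier R. snd p \<otimes> b = snd q \<otimes> b' \<and> snd p \<otimes> b \<in> S
      \<and> fst p \<otimes> b = fst q \<otimes> b')"

definition pairs :: "('a \<times> 'a) set" where "pairs = carrier R \<times> S"

lemma frac_rel_refl: "p \<in> pairs \<Longrightarrow> frac_rel p p"
  unfolding frac_rel_def pairs_def by (rule bexI[of _ \<one>], rule bexI[of _ \<one>]) (auto simp: S_carrier)

lemma frac_rel_sym: "frac_rel p q \<Longrightarrow> frac_rel q p"
  unfolding frac_rel_def by metis

lemma frac_rel_trans: assumes "p \<in> pairs" "q \<in> pairs" "r \<in> pairs" "frac_rel p q" "frac_rel q r"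
  shows "frac_rel p r"
proof -
  obtain a s a' s' a'' s'' where pq: "p = (a,s)" "q = (a',s')" "r = (a'',s'')"
    by (cases p, cases q, cases r) auto
  have c: "a \<in> carrier R" "s \<in> S" "a' \<in> carrier R" "s' \<in> S" "a'' \<in> carrier R" "s'' \<in> S"
    using assms pq by (auto simp: pairs_def)
  have cc: "s \<in> carrier R" "s' \<in> carrier R" "s'' \<in> carrier R" using c S_carrier by auto
  obtain b b' where bb: "b \<in> carrier R" "b' \<in> carrier R" "s \<otimes> b = s' \<otimes> b'" "s \<otimes> b \<in> S" "a \<otimes> b = a' \<otimes> b'"
    using assms(4) pq unfolding frac_rel_def by auto
  obtain c' c'' where cc2: "c' \<in> carrier R" "c'' \<in> carrier R" "s' \<otimes> c' = s'' \<otimes> c''" "s' \<otimes> c' \<in> S"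
    "a' \<otimes> c' = a'' \<otimes> c''"
    using assms(5) pq unfolding frac_rel_def by auto
  obtain x y where xy: "x \<in> carrier R" "y \<in> S" "(s' \<otimes> b') \<otimes> x = (s' \<otimes> c') \<otimes> y" "(s' \<otimes> b') \<otimes> x \<in> S"
    using common_right_multiple[of "s' \<otimes> b'" "s' \<otimes> c'"] bb cc2 by metis
  have yc: "y \<in> carrier R" using S_carrier xy by auto
  have "s' \<otimes> (b' \<otimes> x) = s' \<otimes> (c' \<otimes> y)" using xy(3) xy(1) bb(2) cc2(1) cc yc by (simp only: m_assoc)
  then obtain t where t: "t \<in> S" "b' \<otimes> x \<otimes> t = c' \<otimes> y \<otimes> t"
    using cancel_left_denominator[of s' "b' \<otimes> x" "c' \<otimes> y"] c bb cc2 xy yc by auto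
  have tc: "t \<in> carrier R" using S_carrier t by auto
  note car = c(1,3,5) cc bb(1,2) cc2(1,2) xy(1) yc tc
  show ?thesis unfolding frac_rel_def pq fst_conv snd_conv
  proof (intro bexI conjI)
    show "s \<otimes> (b \<otimes> x \<otimes> t) = s'' \<otimes> (c'' \<otimes> y \<otimes> t)"
      by (rule mult_eq_trans_expand[OF bb(3) cc2(3) t(2)]) (use car in auto)
    show "a \<otimes> (b \<otimes> x \<otimes> t) = a'' \<otimes> (c'' \<otimes> y \<otimes> t)"
      by (rule mult_eq_trans_expand[OF bb(5) cc2(5) t(2)]) (use car in auto)
    have "s \<otimes> (b \<otimes> x \<otimes> t) = (s \<otimes> b) \<otimes> x \<otimes> t" using car by (simp add: m_assoc)
    also have "\<dots> = (s' \<otimes> b') \<otimes> x \<otimes> t" using bb(3) by simp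
    finally show "s \<otimes> (b \<otimes> x \<otimes> t) \<in> S" using xy(4) t(1) mult_S by simp
  qed (use car in auto)
qed

lemma frac_rel_right_mult_eq:
  assumes "a \<in> carrier R" "s \<in> S" "a' \<in> carrier R" "s' \<in> S" "frac_rel (a,s) (a',s')"
  "c \<in> carrier R" "c' \<in> carrier R" "s \<otimes> c = s' \<otimes> c'" "s \<otimes> c \<in> S"
  shows "\<exists>t\<in>S. a \<otimes> c \<otimes> t = a' \<otimes> c' \<otimes> t"
proof -
  obtain b b' where bb: "b \<in> carrier R" "b' \<in> carrier R" "s \<otimes> b = s' \<otimes> b'" "s \<otimes> b \<in> S" "a \<otimes> b = a' \<otimes> b'"
    using assms(5) unfolding frac_rel_def by auto
  obtain x y where xy: "x \<in> carrier R" "y \<in> S" "(s \<otimes> b) \<otimes> x = (s \<otimes> c) \<otimes> y" "(s \<otimes> b) \<otimes> x \<in> S"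
    using common_right_multiple[of "s \<otimes> b" "s \<otimes> c"] bb assms by metis
  have yc: "y \<in> carrier R" using S_carrier xy by auto
  have sc: "s \<in> carrier R" "s' \<in> carrier R" using assms S_carrier by auto
  note car0 = assms(1,3,6,7) bb(1,2) xy(1) yc sc
  have "s \<otimes> (b \<otimes> x) = s \<otimes> (c \<otimes> y)" using xy(3) car0 by (simp add: m_assoc)
  then obtain t1 where t1: "t1 \<in> S" "b \<otimes> x \<otimes> t1 = c \<otimes> y \<otimes> t1"
    using cancel_left_denominator[of s "b \<otimes> x" "c \<otimes> y"] car0 assms(2) by auto
  have t1c: "t1 \<in> carrier R" using S_carrier t1 by auto
  have "s' \<otimes> (b' \<otimes> x \<otimes> t1) = s' \<otimes> (c' \<otimes> y \<otimes> t1)"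
    using bb(3) assms(8) xy(3) car0 t1c by (simp add: m_assoc[symmetric])
  then obtain t2 where t2: "t2 \<in> S" "b' \<otimes> x \<otimes> t1 \<otimes> t2 = c' \<otimes> y \<otimes> t1 \<otimes> t2"
    using cancel_left_denominator[of s' "b' \<otimes> x \<otimes> t1" "c' \<otimes> y \<otimes> t1"] car0 t1c assms(4) by auto
  have t2c: "t2 \<in> carrier R" using S_carrier t2 by auto
  note car = car0 t1c t2c
  have "a \<otimes> c \<otimes> (y \<otimes> t1 \<otimes> t2) = a \<otimes> (c \<otimes> y \<otimes> t1) \<otimes> t2" using car by (simp add: m_assoc)
  also have "\<dots> = a \<otimes> (b \<otimes> x \<otimes> t1) \<otimes> t2" using t1(2) by simp
  also have "\<dots> = (a \<otimes> b) \<otimes> (x \<otimes> t1 \<otimes> t2)" using car by (simp add: m_assoc)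
  also have "\<dots> = (a' \<otimes> b') \<otimes> (x \<otimes> t1 \<otimes> t2)" using bb(5) by simp
  also have "\<dots> = a' \<otimes> (b' \<otimes> x \<otimes> t1 \<otimes> t2)" using car by (simp add: m_assoc)
  also have "\<dots> = a' \<otimes> (c' \<otimes> y \<otimes> t1 \<otimes> t2)" using t2(2) by simp
  also have "\<dots> = a' \<otimes> c' \<otimes> (y \<otimes> t1 \<otimes> t2)" using car by (simp add: m_assoc)
  finally show ?thesis using mult_S xy(2) t1(1) t2(1) by blast
qed

lemma frac_rel_expand: assumes "a \<in> carrier R" "s \<in> S" "c \<in> carrier R" "s \<otimes> c \<in> S"
  shows "frac_rel (a,s) (a \<otimes> c, s \<otimes> c)"
  unfolding frac_rel_def fst_conv snd_conv
  by (rule bexI[of _ c], rule bexI[of _ \<one>]) (use assms S_carrier in auto)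

definition frac_class :: "'a \<Rightarrow> 'a \<Rightarrow> ('a \<times> 'a) set" where
  "frac_class a s = {p \<in> pairs. frac_rel p (a,s)}"

lemma in_pairs: "a \<in> carrier R \<Longrightarrow> s \<in> S \<Longrightarrow> (a,s) \<in> pairs" by (simp add: pairs_def)

lemma frac_eq_iff: assumes "a \<in> carrier R" "s \<in> S" "a' \<in> carrier R" "s' \<in> S"
  shows "frac_class a s = frac_class a' s' \<longleftrightarrow> frac_rel (a,s) (a',s')"
proof
  assume "frac_class a s = frac_class a' s'"
  then have "(a,s) \<in> frac_class a' s'" using frac_rel_refl[OF in_pairs[OF assms(1,2)]] in_pairs[OF assms(1,2)]
    unfolding frac_class_def by blast
  then show "frac_rel (a,s) (a',s')" unfolding frac_class_def by auto
next
  assume e: "frac_rel (a,s) (a',s')"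
  show "frac_class a s = frac_class a' s'" unfolding frac_class_def
    using e frac_rel_sym frac_rel_trans in_pairs assms by blast
qed

lemma frac_eqI: "\<lbrakk>a \<in> carrier R; s \<in> S; a' \<in> carrier R; s' \<in> S; frac_rel (a,s) (a',s')\<rbrakk> \<Longrightarrow> frac_class a s = frac_class a' s'"
  using frac_eq_iff by blast

lemma frac_expand: "\<lbrakk>a \<in> carrier R; s \<in> S; c \<in> carrier R; s \<otimes> c \<in> S\<rbrakk> \<Longrightarrow> frac_class a s = frac_class (a \<otimes> c) (s \<otimes> c)"
  by (rule frac_eqI) (auto intro: frac_rel_expand)

lemma mem_frac: "(x,y) \<in> frac_class a s \<longleftrightarrow> x \<in> carrier R \<and> y \<in> S \<and> frac_rel (x,y) (a,s)"
  unfolding frac_class_def pairs_def by auto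

lemma frac_rel_add_cong:
  assumes "a1 \<in> carrier R" "s1 \<in> S" "a2 \<in> carrier R" "s2 \<in> S" "frac_rel (a1,s1) (a2,s2)"
  "a1' \<in> carrier R" "s1' \<in> S" "a2' \<in> carrier R" "s2' \<in> S" "frac_rel (a1',s1') (a2',s2')"
  "c1 \<in> carrier R" "c1' \<in> carrier R" "s1 \<otimes> c1 = s1' \<otimes> c1'" "s1 \<otimes> c1 \<in> S"
  "c2 \<in> carrier R" "c2' \<in> carrier R" "s2 \<otimes> c2 = s2' \<otimes> c2'" "s2 \<otimes> c2 \<in> S"
  shows "frac_rel (a1 \<otimes> c1 \<oplus> a1' \<otimes> c1', s1 \<otimes> c1) (a2 \<otimes> c2 \<oplus> a2' \<otimes> c2', s2 \<otimes> c2)"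
proof -
  obtain x y where xy: "x \<in> carrier R" "y \<in> S" "(s1 \<otimes> c1) \<otimes> x = (s2 \<otimes> c2) \<otimes> y" "(s1 \<otimes> c1) \<otimes> x \<in> S"
    using common_right_multiple[of "s1 \<otimes> c1" "s2 \<otimes> c2"] assms by metis
  have yc: "y \<in> carrier R" using S_carrier xy by auto
  have sc: "s1 \<in> carrier R" "s2 \<in> carrier R" "s1' \<in> carrier R" "s2' \<in> carrier R" using assms S_carrier by auto
  note car0 = assms(1,3,6,8,11,12,15,16) xy(1) yc sc
  have e1: "s1 \<otimes> (c1 \<otimes> x) = s2 \<otimes> (c2 \<otimes> y)" "s1 \<otimes> (c1 \<otimes> x) \<in> S"
    using xy(3,4) car0 by (simp_all add: m_assoc)
  obtain t1 where t1: "t1 \<in> S" "a1 \<otimes> (c1 \<otimes> x) \<otimes> t1 = a2 \<otimes> (c2 \<otimes> y) \<otimes> t1"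
    using frac_rel_right_mult_eq[OF assms(1-5) _ _ e1] car0 by auto
  have t1c: "t1 \<in> carrier R" using S_carrier t1 by auto
  have e2: "s1' \<otimes> (c1' \<otimes> x \<otimes> t1) = s2' \<otimes> (c2' \<otimes> y \<otimes> t1)" "s1' \<otimes> (c1' \<otimes> x \<otimes> t1) \<in> S"
    using assms(13,17) xy(3) mult_S[OF xy(4) t1(1)] car0 t1c by (simp_all add: m_assoc[symmetric])
  obtain t2 where t2: "t2 \<in> S" "a1' \<otimes> (c1' \<otimes> x \<otimes> t1) \<otimes> t2 = a2' \<otimes> (c2' \<otimes> y \<otimes> t1) \<otimes> t2"
    using frac_rel_right_mult_eq[OF assms(6-10) _ _ e2] car0 t1c by auto
  have t2c: "t2 \<in> carrier R" using S_carrier t2 by auto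
  note car = car0 t1c t2c
  show ?thesis unfolding frac_rel_def fst_conv snd_conv
  proof (intro bexI conjI)
    show "s1 \<otimes> c1 \<otimes> (x \<otimes> t1 \<otimes> t2) = s2 \<otimes> c2 \<otimes> (y \<otimes> t1 \<otimes> t2)"
      using xy(3) car by (simp add: m_assoc[symmetric])
    show "s1 \<otimes> c1 \<otimes> (x \<otimes> t1 \<otimes> t2) \<in> S"
      using xy(4) t1(1) t2(1) mult_S car by (simp add: m_assoc[symmetric])
    have "a1 \<otimes> c1 \<otimes> (x \<otimes> t1 \<otimes> t2) = a2 \<otimes> c2 \<otimes> (y \<otimes> t1 \<otimes> t2)"
      using t1(2) car by (simp add: m_assoc[symmetric])
    moreover have "a1' \<otimes> c1' \<otimes> (x \<otimes> t1 \<otimes> t2) = a2' \<otimes> c2' \<otimes> (y \<otimes> t1 \<otimes> t2)"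
      using t2(2) car by (simp add: m_assoc[symmetric])
    ultimately show "(a1 \<otimes> c1 \<oplus> a1' \<otimes> c1') \<otimes> (x \<otimes> t1 \<otimes> t2) = (a2 \<otimes> c2 \<oplus> a2' \<otimes> c2') \<otimes> (y \<otimes> t1 \<otimes> t2)"
      using car by (simp add: l_distr)
  qed (use car in auto)
qed

definition frac_add :: "('a \<times> 'a) set \<Rightarrow> ('a \<times> 'a) set \<Rightarrow> ('a \<times> 'a) set" where
  "frac_add U V = {p \<in> pairs. \<exists>a s a' s' b b'. (a,s) \<in> U \<and> (a',s') \<in> V \<and> b \<in> carrier R \<and> b' \<in> carrier R \<and>
     s \<otimes> b = s' \<otimes> b' \<and> s \<otimes> b \<in> S \<and> frac_rel p (a \<otimes> b \<oplus> a' \<otimes> b', s \<otimes> b)}"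

lemma frac_add_frac: assumes "a \<in> carrier R" "s \<in> S" "a' \<in> carrier R" "s' \<in> S"
  "b \<in> carrier R" "b' \<in> carrier R" "s \<otimes> b = s' \<otimes> b'" "s \<otimes> b \<in> S"
  shows "frac_add (frac_class a s) (frac_class a' s') = frac_class (a \<otimes> b \<oplus> a' \<otimes> b') (s \<otimes> b)"
proof -
  have sc: "s \<in> carrier R" "s' \<in> carrier R" using assms S_carrier by auto
  have tP: "(a \<otimes> b \<oplus> a' \<otimes> b', s \<otimes> b) \<in> pairs" using assms sc by (simp add: pairs_def)
  show ?thesis
  proof (intro Set.set_eqI iffI)
    fix p assume "p \<in> frac_add (frac_class a s) (frac_class a' s')"
    then obtain a1 s1 a1' s1' c c' where h: "p \<in> pairs" "(a1,s1) \<in> frac_class a s"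
      "(a1',s1') \<in> frac_class a' s'"
      "c \<in> carrier R" "c' \<in> carrier R" "s1 \<otimes> c = s1' \<otimes> c'" "s1 \<otimes> c \<in> S"
      "frac_rel p (a1 \<otimes> c \<oplus> a1' \<otimes> c', s1 \<otimes> c)" unfolding frac_add_def by blast
    have m: "a1 \<in> carrier R" "s1 \<in> S" "frac_rel (a1,s1) (a,s)" "a1' \<in> carrier R" "s1' \<in> S"
      "frac_rel (a1',s1') (a',s')"
      using h(2,3) mem_frac by auto
    have W: "frac_rel (a1 \<otimes> c \<oplus> a1' \<otimes> c', s1 \<otimes> c) (a \<otimes> b \<oplus> a' \<otimes> b', s \<otimes> b)"
      by (rule frac_rel_add_cong) (use m h assms in auto)
    have "(a1 \<otimes> c \<oplus> a1' \<otimes> c', s1 \<otimes> c) \<in> pairs" using m h S_carrier by (auto simp: pairs_def)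
    then have "frac_rel p (a \<otimes> b \<oplus> a' \<otimes> b', s \<otimes> b)" using frac_rel_trans h(1,8) W tP by blast
    then show "p \<in> frac_class (a \<otimes> b \<oplus> a' \<otimes> b') (s \<otimes> b)" using h(1) unfolding frac_class_def by auto
  next
    fix p assume "p \<in> frac_class (a \<otimes> b \<oplus> a' \<otimes> b') (s \<otimes> b)"
    then have "p \<in> pairs" "frac_rel p (a \<otimes> b \<oplus> a' \<otimes> b', s \<otimes> b)" unfolding frac_class_def by auto
    moreover have "(a,s) \<in> frac_class a s" "(a',s') \<in> frac_class a' s'"
      using assms frac_rel_refl in_pairs mem_frac by auto
    ultimately show "p \<in> frac_add (frac_class a s) (frac_class a' s')" unfolding frac_add_def using assms
      by blast
  qed
qed

lemma frac_rel_mult_choice: assumes "a \<in> carrier R" "s \<in> S" "a' \<in> carrier R" "s' \<in> S"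
  "t \<in> S" "b \<in> carrier R" "a' \<otimes> t = s \<otimes> b" "t' \<in> S" "b' \<in> carrier R" "a' \<otimes> t' = s \<otimes> b'"
  shows "frac_rel (a \<otimes> b, s' \<otimes> t) (a \<otimes> b', s' \<otimes> t')"
proof -
  obtain x y where xy: "x \<in> carrier R" "y \<in> S" "t \<otimes> x = t' \<otimes> y" "t \<otimes> x \<in> S"
    using common_right_multiple[of t t'] assms by metis
  have sc: "s \<in> carrier R" "s' \<in> carrier R" "t \<in> carrier R" "t' \<in> carrier R" "y \<in> carrier R"
    using assms xy S_carrier by auto
  note car0 = sc assms(1,3,6,9) xy(1)
  have "s \<otimes> (b \<otimes> x) = (s \<otimes> b) \<otimes> x" using car0 by (simp add: m_assoc)
  also have "\<dots> = a' \<otimes> (t \<otimes> x)" using assms(7) car0 by (simp add: m_assoc[symmetric])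
  also have "\<dots> = a' \<otimes> (t' \<otimes> y)" using xy(3) by simp
  also have "\<dots> = (s \<otimes> b') \<otimes> y" using assms(10) car0 by (simp add: m_assoc[symmetric])
  also have "\<dots> = s \<otimes> (b' \<otimes> y)" using car0 by (simp add: m_assoc)
  finally obtain u where u: "u \<in> S" "b \<otimes> x \<otimes> u = b' \<otimes> y \<otimes> u"
    using cancel_left_denominator[of s "b \<otimes> x" "b' \<otimes> y"] car0 assms(2) by auto
  have uc: "u \<in> carrier R" using u S_carrier by auto
  note car = car0 uc
  show ?thesis unfolding frac_rel_def fst_conv snd_conv
  proof (intro bexI conjI)
    show "s' \<otimes> t \<otimes> (x \<otimes> u) = s' \<otimes> t' \<otimes> (y \<otimes> u)"
    proof -
      have "s' \<otimes> t \<otimes> (x \<otimes> u) = s' \<otimes> (t \<otimes> x) \<otimes> u" using car by (simp add: m_assoc)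
      also have "\<dots> = s' \<otimes> (t' \<otimes> y) \<otimes> u" using xy(3) by simp
      finally show ?thesis using car by (simp add: m_assoc)
    qed
    show "s' \<otimes> t \<otimes> (x \<otimes> u) \<in> S"
    proof -
      have "s' \<otimes> t \<otimes> (x \<otimes> u) = s' \<otimes> (t \<otimes> x) \<otimes> u" using car by (simp add: m_assoc)
      then show ?thesis using mult_S assms(4) xy(4) u(1) by simp
    qed
    show "a \<otimes> b \<otimes> (x \<otimes> u) = a \<otimes> b' \<otimes> (y \<otimes> u)" using u(2) car by (simp add: m_assoc)
  qed (use car in auto)
qed

lemma frac_rel_mult_expand_right:
  assumes "a \<in> carrier R" "s \<in> S" "a' \<in> carrier R" "s' \<in> S" "c \<in> carrier R" "s' \<otimes> c \<in> S"
  "t \<in> S" "b \<in> carrier R" "a' \<otimes> t = s \<otimes> b" "t2 \<in> S" "b2 \<in> carrier R" "(a' \<otimes> c) \<otimes> t2 = s \<otimes> b2"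
  shows "frac_rel (a \<otimes> b, s' \<otimes> t) (a \<otimes> b2, (s' \<otimes> c) \<otimes> t2)"
proof -
  have sc: "s \<in> carrier R" "s' \<in> carrier R" "t \<in> carrier R" "t2 \<in> carrier R" using assms S_carrier by auto
  obtain t3 x where tx: "t3 \<in> S" "x \<in> carrier R" "c \<otimes> t3 = t \<otimes> x" using ore_condition[OF assms(5,7)] by blast
  have t3c: "t3 \<in> carrier R" using tx S_carrier by auto
  note car = sc t3c tx(2) assms(1,3,5,8,11)
  have e1: "(a' \<otimes> c) \<otimes> t3 = s \<otimes> (b \<otimes> x)"
  proof -
    have "(a' \<otimes> c) \<otimes> t3 = a' \<otimes> (c \<otimes> t3)" using car by (simp add: m_assoc)
    also have "\<dots> = a' \<otimes> (t \<otimes> x)" using tx(3) by simp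
    also have "\<dots> = (s \<otimes> b) \<otimes> x" using assms(9) car by (simp add: m_assoc[symmetric])
    finally show ?thesis using car by (simp add: m_assoc)
  qed
  have eqd: "(s' \<otimes> c) \<otimes> t3 = s' \<otimes> t \<otimes> x"
  proof -
    have "(s' \<otimes> c) \<otimes> t3 = s' \<otimes> (c \<otimes> t3)" using car by (simp add: m_assoc)
    also have "\<dots> = s' \<otimes> (t \<otimes> x)" using tx(3) by simp
    finally show ?thesis using car by (simp add: m_assoc)
  qed
  have inS: "s' \<otimes> t \<otimes> x \<in> S" using eqd[symmetric] mult_S assms(6) tx(1) by simp
  have c1: "frac_rel (a \<otimes> (b \<otimes> x), (s' \<otimes> c) \<otimes> t3) (a \<otimes> b2, (s' \<otimes> c) \<otimes> t2)"
    by (rule frac_rel_mult_choice) (use assms car tx e1 in auto)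
  have c2: "frac_rel (a \<otimes> b, s' \<otimes> t) (a \<otimes> b \<otimes> x, s' \<otimes> t \<otimes> x)"
    by (rule frac_rel_expand) (use assms car inS mult_S in auto)
  have pe: "(a \<otimes> b \<otimes> x, s' \<otimes> t \<otimes> x) = (a \<otimes> (b \<otimes> x), (s' \<otimes> c) \<otimes> t3)"
    using eqd car by (simp add: m_assoc)
  show ?thesis
    by (rule frac_rel_trans[OF _ _ _ c2 c1[folded pe]]) (use assms car inS mult_S in \<open>auto simp: pairs_def\<close>)
qed

lemma frac_rel_mult_expand_left:
  assumes "a \<in> carrier R" "s \<in> S" "a' \<in> carrier R" "s' \<in> S" "c \<in> carrier R" "s \<otimes> c \<in> S"
  "t \<in> S" "b \<in> carrier R" "a' \<otimes> t = s \<otimes> b" "t2 \<in> S" "b2 \<in> carrier R" "a' \<otimes> t2 = (s \<otimes> c) \<otimes> b2"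
  shows "frac_rel (a \<otimes> b, s' \<otimes> t) ((a \<otimes> c) \<otimes> b2, s' \<otimes> t2)"
proof -
  have sc: "s \<in> carrier R" using assms S_carrier by auto
  have "a' \<otimes> t2 = s \<otimes> (c \<otimes> b2)" using assms(12) sc assms by (simp add: m_assoc)
  from frac_rel_mult_choice[OF assms(1-4,7,8,9,10) _ this] assms
  show ?thesis by (simp add: m_assoc)
qed

lemma frac_rel_mult_cong:
  assumes "a1 \<in> carrier R" "s1 \<in> S" "a2 \<in> carrier R" "s2 \<in> S" "frac_rel (a1,s1) (a2,s2)"
  "a1' \<in> carrier R" "s1' \<in> S" "a2' \<in> carrier R" "s2' \<in> S" "frac_rel (a1',s1') (a2',s2')"
  "t1 \<in> S" "b1 \<in> carrier R" "a1' \<otimes> t1 = s1 \<otimes> b1"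
  "t2 \<in> S" "b2 \<in> carrier R" "a2' \<otimes> t2 = s2 \<otimes> b2"
  shows "frac_rel (a1 \<otimes> b1, s1' \<otimes> t1) (a2 \<otimes> b2, s2' \<otimes> t2)"
proof -
  obtain \<beta> \<beta>' where be: "\<beta> \<in> carrier R" "\<beta>' \<in> carrier R" "s1 \<otimes> \<beta> = s2 \<otimes> \<beta>'" "s1 \<otimes> \<beta> \<in> S" "a1 \<otimes> \<beta> = a2 \<otimes> \<beta>'"
    using assms(5) unfolding frac_rel_def by auto
  obtain \<gamma> \<gamma>' where ga: "\<gamma> \<in> carrier R" "\<gamma>' \<in> carrier R" "s1' \<otimes> \<gamma> = s2' \<otimes> \<gamma>'" "s1' \<otimes> \<gamma> \<in> S"
    "a1' \<otimes> \<gamma> = a2' \<otimes> \<gamma>'"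
    using assms(10) unfolding frac_rel_def by auto
  obtain t3 b3 where tb3: "t3 \<in> S" "b3 \<in> carrier R" "a1' \<otimes> t3 = (s1 \<otimes> \<beta>) \<otimes> b3"
    using ore_condition[OF assms(6) be(4)] by blast
  obtain t4 b4 where tb4: "t4 \<in> S" "b4 \<in> carrier R" "a1' \<otimes> t4 = s2 \<otimes> b4"
    using ore_condition[OF assms(6) assms(4)] by blast
  have a1g: "a1' \<otimes> \<gamma> \<in> carrier R" using assms ga by simp
  obtain t5 b5 where tb5: "t5 \<in> S" "b5 \<in> carrier R" "(a1' \<otimes> \<gamma>) \<otimes> t5 = s2 \<otimes> b5"
    using ore_condition[OF a1g assms(4)] by blast
  have sc: "s1 \<in> carrier R" "s2 \<in> carrier R" "s1' \<in> carrier R" "s2' \<in> carrier R"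
     "t1 \<in> carrier R" "t2 \<in> carrier R" "t3 \<in> carrier R" "t4 \<in> carrier R" "t5 \<in> carrier R"
    using assms tb3 tb4 tb5 S_carrier by auto
  note car = sc assms(1,3,6,8,12,15) be(1,2) ga(1,2) tb3(2) tb4(2) tb5(2)
  have e13: "frac_rel (a1 \<otimes> b1, s1' \<otimes> t1) ((a1 \<otimes> \<beta>) \<otimes> b3, s1' \<otimes> t3)"
    by (rule frac_rel_mult_expand_left) (use assms be tb3 in auto)
  have e43: "frac_rel (a2 \<otimes> b4, s1' \<otimes> t4) ((a2 \<otimes> \<beta>') \<otimes> b3, s1' \<otimes> t3)"
    by (rule frac_rel_mult_expand_left) (use assms be tb3 tb4 in auto)
  have e45: "frac_rel (a2 \<otimes> b4, s1' \<otimes> t4) (a2 \<otimes> b5, (s1' \<otimes> \<gamma>) \<otimes> t5)"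
    by (rule frac_rel_mult_expand_right) (use assms ga tb4 tb5 in auto)
  have e25: "frac_rel (a2 \<otimes> b2, s2' \<otimes> t2) (a2 \<otimes> b5, (s2' \<otimes> \<gamma>') \<otimes> t5)"
    by (rule frac_rel_mult_expand_right) (use assms ga tb5 in auto)
  have P1: "(a1 \<otimes> b1, s1' \<otimes> t1) \<in> pairs" "((a1 \<otimes> \<beta>) \<otimes> b3, s1' \<otimes> t3) \<in> pairs"
    "(a2 \<otimes> b4, s1' \<otimes> t4) \<in> pairs" "(a2 \<otimes> b5, (s1' \<otimes> \<gamma>) \<otimes> t5) \<in> pairs" "(a2 \<otimes> b2, s2' \<otimes> t2) \<in> pairs"
    using car mult_S assms tb3 tb4 tb5 ga by (auto simp: pairs_def)
  have "frac_rel (a1 \<otimes> b1, s1' \<otimes> t1) (a2 \<otimes> b4, s1' \<otimes> t4)"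
    using frac_rel_trans[OF P1(1,2,3) e13 frac_rel_sym[OF e43[folded be(5)]]] .
  then have "frac_rel (a1 \<otimes> b1, s1' \<otimes> t1) (a2 \<otimes> b5, (s1' \<otimes> \<gamma>) \<otimes> t5)"
    using frac_rel_trans[OF P1(1,3,4) _ e45] by blast
  then show ?thesis
    using frac_rel_trans[OF P1(1,4,5) _ frac_rel_sym[OF e25[folded ga(3)]]] by blast
qed

text \<open>If \<open>a' t = s b\<close> then \<open>s\<^sup>-\<^sup>1 a' = b t\<^sup>-\<^sup>1\<close>, whence \<open>(a s\<^sup>-\<^sup>1)(a' s'\<^sup>-\<^sup>1) = a b (s' t)\<^sup>-\<^sup>1\<close>.\<close>
definition frac_mult :: "('a \<times> 'a) set \<Rightarrow> ('a \<times> 'a) set \<Rightarrow> ('a \<times> 'a) set" where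
  "frac_mult U V = {p \<in> pairs. \<exists>a s a' s' b t. (a,s) \<in> U \<and> (a',s') \<in> V \<and> b \<in> carrier R \<and> t \<in> S \<and>
     a' \<otimes> t = s \<otimes> b \<and> frac_rel p (a \<otimes> b, s' \<otimes> t)}"

lemma frac_mult_frac: assumes "a \<in> carrier R" "s \<in> S" "a' \<in> carrier R" "s' \<in> S"
  "b \<in> carrier R" "t \<in> S" "a' \<otimes> t = s \<otimes> b"
  shows "frac_mult (frac_class a s) (frac_class a' s') = frac_class (a \<otimes> b) (s' \<otimes> t)"
proof -
  have sc: "s \<in> carrier R" "s' \<in> carrier R" "t \<in> carrier R" using assms S_carrier by auto
  have tP: "(a \<otimes> b, s' \<otimes> t) \<in> pairs" using assms sc mult_S by (simp add: pairs_def)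
  show ?thesis
  proof (intro Set.set_eqI iffI)
    fix p assume "p \<in> frac_mult (frac_class a s) (frac_class a' s')"
    then obtain a1 s1 a1' s1' c u where h: "p \<in> pairs" "(a1,s1) \<in> frac_class a s"
      "(a1',s1') \<in> frac_class a' s'"
      "c \<in> carrier R" "u \<in> S" "a1' \<otimes> u = s1 \<otimes> c" "frac_rel p (a1 \<otimes> c, s1' \<otimes> u)" unfolding frac_mult_def
        by blast
    have m: "a1 \<in> carrier R" "s1 \<in> S" "frac_rel (a1,s1) (a,s)" "a1' \<in> carrier R" "s1' \<in> S"
      "frac_rel (a1',s1') (a',s')"
      using h(2,3) mem_frac by auto
    have W: "frac_rel (a1 \<otimes> c, s1' \<otimes> u) (a \<otimes> b, s' \<otimes> t)"
      by (rule frac_rel_mult_cong) (use m h assms in auto)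
    have "(a1 \<otimes> c, s1' \<otimes> u) \<in> pairs" using m h S_carrier mult_S by (auto simp: pairs_def)
    then have "frac_rel p (a \<otimes> b, s' \<otimes> t)" using frac_rel_trans h(1,7) W tP by blast
    then show "p \<in> frac_class (a \<otimes> b) (s' \<otimes> t)" using h(1) unfolding frac_class_def by auto
  next
    fix p assume "p \<in> frac_class (a \<otimes> b) (s' \<otimes> t)"
    then have "p \<in> pairs" "frac_rel p (a \<otimes> b, s' \<otimes> t)" unfolding frac_class_def by auto
    moreover have "(a,s) \<in> frac_class a s" "(a',s') \<in> frac_class a' s'"
      using assms frac_rel_refl in_pairs mem_frac by auto
    ultimately show "p \<in> frac_mult (frac_class a s) (frac_class a' s')" unfolding frac_mult_def using assms
      by blast
  qed
qed

definition frac_smult :: "complex \<Rightarrow> ('a \<times> 'a) set \<Rightarrow> ('a \<times> 'a) set" where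
  "frac_smult c U = {p \<in> pairs. \<exists>a s. (a,s) \<in> U \<and> frac_rel p (c \<odot>\<^bsub>R\<^esub> a, s)}"

lemma frac_rel_smult: assumes "a \<in> carrier R" "a' \<in> carrier R" "frac_rel (a,s) (a',s')"
  shows "frac_rel (c \<odot>\<^bsub>R\<^esub> a, s) (c \<odot>\<^bsub>R\<^esub> a', s')"
proof -
  obtain b b' where bb: "b \<in> carrier R" "b' \<in> carrier R" "s \<otimes> b = s' \<otimes> b'" "s \<otimes> b \<in> S" "a \<otimes> b = a' \<otimes> b'"
    using assms(3) unfolding frac_rel_def by auto
  have "(c \<odot>\<^bsub>R\<^esub> a) \<otimes> b = (c \<odot>\<^bsub>R\<^esub> a') \<otimes> b'" using bb assms by (simp add: smult_mult_left)
  then show ?thesis unfolding frac_rel_def fst_conv snd_conv using bb by blast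
qed

lemma frac_smult_frac: assumes "a \<in> carrier R" "s \<in> S"
  shows "frac_smult c (frac_class a s) = frac_class (c \<odot>\<^bsub>R\<^esub> a) s"
proof (intro Set.set_eqI iffI)
  fix p assume "p \<in> frac_smult c (frac_class a s)"
  then obtain a1 s1 where h: "p \<in> pairs" "(a1,s1) \<in> frac_class a s" "frac_rel p (c \<odot>\<^bsub>R\<^esub> a1, s1)"
    unfolding frac_smult_def by blast
  have m: "a1 \<in> carrier R" "s1 \<in> S" "frac_rel (a1,s1) (a,s)" using h(2) mem_frac by auto
  have "frac_rel p (c \<odot>\<^bsub>R\<^esub> a, s)"
    by (rule frac_rel_trans[OF h(1) _ _ h(3) frac_rel_smult[OF m(1) assms(1) m(3)]]) (use m assms smult_closed
      in \<open>auto simp: pairs_def\<close>)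
  then show "p \<in> frac_class (c \<odot>\<^bsub>R\<^esub> a) s" using h(1) unfolding frac_class_def by auto
next
  fix p assume "p \<in> frac_class (c \<odot>\<^bsub>R\<^esub> a) s"
  then have "p \<in> pairs" "frac_rel p (c \<odot>\<^bsub>R\<^esub> a, s)" unfolding frac_class_def by auto
  moreover have "(a,s) \<in> frac_class a s" using assms frac_rel_refl in_pairs mem_frac by auto
  ultimately show "p \<in> frac_smult c (frac_class a s)" unfolding frac_smult_def by blast
qed

definition Frac :: "(complex, ('a \<times> 'a) set) module" where
  "Frac = \<lparr>carrier = {frac_class a s | a s. a \<in> carrier R \<and> s \<in> S}, monoid.mult = frac_mult, monoid.one = frac_class \<one> \<one>,
     ring.zero = frac_class \<zero> \<one>, ring.add = frac_add, module.smult = frac_smult\<rparr>"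

lemma Frac_simps[simp]: "carrier Frac = {frac_class a s | a s. a \<in> carrier R \<and> s \<in> S}"
  "monoid.mult Frac = frac_mult" "monoid.one Frac = frac_class \<one> \<one>" "ring.zero Frac = frac_class \<zero> \<one>"
    "ring.add Frac = frac_add"
  "module.smult Frac = frac_smult"
  by (simp_all add: Frac_def)

lemma frac_in_Frac: "a \<in> carrier R \<Longrightarrow> s \<in> S \<Longrightarrow> frac_class a s \<in> carrier Frac" by auto

lemma common_denominator2: assumes "s \<in> S" "s' \<in> S" "a \<in> carrier R" "a' \<in> carrier R"
  obtains d x x' where "d \<in> S" "x \<in> carrier R" "x' \<in> carrier R" "frac_class a s = frac_class x d"
    "frac_class a' s' = frac_class x' d"
proof -
  obtain b t where bt: "b \<in> carrier R" "t \<in> S" "s \<otimes> b = s' \<otimes> t" "s \<otimes> b \<in> S"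
    using common_right_multiple[OF assms(1,2)] by blast
  have tc: "t \<in> carrier R" using bt S_carrier by auto
  have "frac_class a s = frac_class (a \<otimes> b) (s \<otimes> b)" using frac_expand assms bt by auto
  moreover have "frac_class a' s' = frac_class (a' \<otimes> t) (s \<otimes> b)" using frac_expand[of a' s' t] assms bt tc
    by auto
  ultimately show ?thesis using bt assms tc by (intro that[of "s \<otimes> b" "a \<otimes> b" "a' \<otimes> t"]) auto
qed

lemma frac_add_same_denom:
  "a \<in> carrier R \<Longrightarrow> a' \<in> carrier R \<Longrightarrow> d \<in> S \<Longrightarrow> frac_add (frac_class a d) (frac_class a' d) = frac_class (a \<oplus> a') d"
  using frac_add_frac[of a d a' d \<one> \<one>] S_carrier by auto

lemma frac_zero: "s \<in> S \<Longrightarrow> frac_class \<zero> \<one> = frac_class \<zero> s"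
  using frac_expand[of \<zero> \<one> s] one_S S_carrier by auto

lemma frac_add_closed: "x \<in> carrier Frac \<Longrightarrow> y \<in> carrier Frac \<Longrightarrow> frac_add x y \<in> carrier Frac"
proof -
  assume "x \<in> carrier Frac" "y \<in> carrier Frac"
  then obtain a s a' s' where h: "a \<in> carrier R" "s \<in> S" "a' \<in> carrier R" "s' \<in> S" "x = frac_class a s"
    "y = frac_class a' s'" by auto
  obtain d z z' where "d \<in> S" "z \<in> carrier R" "z' \<in> carrier R" "frac_class a s = frac_class z d"
    "frac_class a' s' = frac_class z' d"
    using common_denominator2[OF h(2,4,1,3)] .
  then show ?thesis using h frac_add_same_denom by auto
qed

lemma frac_mult_closed: "x \<in> carrier Frac \<Longrightarrow> y \<in> carrier Frac \<Longrightarrow> frac_mult x y \<in> carrier Frac"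
proof -
  assume "x \<in> carrier Frac" "y \<in> carrier Frac"
  then obtain a s a' s' where h: "a \<in> carrier R" "s \<in> S" "a' \<in> carrier R" "s' \<in> S" "x = frac_class a s"
    "y = frac_class a' s'" by auto
  obtain t b where "t \<in> S" "b \<in> carrier R" "a' \<otimes> t = s \<otimes> b" using ore_condition[OF h(3,2)] by blast
  then have "frac_mult x y = frac_class (a \<otimes> b) (s' \<otimes> t)" using h frac_mult_frac[of a s a' s' b t] by auto
  moreover have "frac_class (a \<otimes> b) (s' \<otimes> t) \<in> carrier Frac"
    by (rule frac_in_Frac) (use h \<open>t \<in> S\<close> \<open>b \<in> carrier R\<close> mult_S in auto)
  ultimately show ?thesis by simp
qed

lemma FracE: assumes "x \<in> carrier Frac" obtains a s where "a \<in> carrier R" "s \<in> S" "x = frac_class a s"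
  using assms by auto

lemma common_denominator3:
  assumes "s1 \<in> S" "s2 \<in> S" "s3 \<in> S" "a1 \<in> carrier R" "a2 \<in> carrier R" "a3 \<in> carrier R"
  obtains D x1 x2 x3 where "D \<in> S" "x1 \<in> carrier R" "x2 \<in> carrier R" "x3 \<in> carrier R"
    "frac_class a1 s1 = frac_class x1 D" "frac_class a2 s2 = frac_class x2 D"
      "frac_class a3 s3 = frac_class x3 D"
proof -
  obtain b1 t1 where 1: "b1 \<in> carrier R" "t1 \<in> S" "s1 \<otimes> b1 = s2 \<otimes> t1" "s1 \<otimes> b1 \<in> S"
    using common_right_multiple[OF assms(1,2)] by blast
  obtain b2 t2 where 2: "b2 \<in> carrier R" "t2 \<in> S" "(s1 \<otimes> b1) \<otimes> b2 = s3 \<otimes> t2" "(s1 \<otimes> b1) \<otimes> b2 \<in> S"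
    using common_right_multiple[OF 1(4) assms(3)] by blast
  have sc: "s1 \<in> carrier R" "s2 \<in> carrier R" "s3 \<in> carrier R" "t1 \<in> carrier R" "t2 \<in> carrier R"
    using assms 1 2 S_carrier by auto
  define D where "D = (s1 \<otimes> b1) \<otimes> b2"
  have e1: "s1 \<otimes> (b1 \<otimes> b2) = D" unfolding D_def using sc 1(1) 2(1) by (simp add: m_assoc)
  have e2: "s2 \<otimes> (t1 \<otimes> b2) = D" unfolding D_def using sc 1(1,3) 2(1) by (simp add: m_assoc[symmetric])
  have e3: "s3 \<otimes> t2 = D" using 2 D_def by simp
  have DS: "D \<in> S" using 2 D_def by simp
  have "frac_class a1 s1 = frac_class (a1 \<otimes> (b1 \<otimes> b2)) D"
    using frac_expand[of a1 s1 "b1 \<otimes> b2"] e1 DS assms 1 2 by simp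
  moreover have "frac_class a2 s2 = frac_class (a2 \<otimes> (t1 \<otimes> b2)) D"
    using frac_expand[of a2 s2 "t1 \<otimes> b2"] e2 DS assms 1 2 sc by simp
  moreover have "frac_class a3 s3 = frac_class (a3 \<otimes> t2) D" using frac_expand[of a3 s3 t2] e3 DS assms 1 2 sc
    by simp
  ultimately show ?thesis using DS assms 1 2 sc
    by (intro that[of D "a1 \<otimes> (b1 \<otimes> b2)" "a2 \<otimes> (t1 \<otimes> b2)" "a3 \<otimes> t2"]) auto
qed

lemma abelian_group_Frac: "abelian_group Frac"
proof (rule abelian_groupI)
  fix x y assume "x \<in> carrier Frac" "y \<in> carrier Frac"
  then show "x \<oplus>\<^bsub>Frac\<^esub> y \<in> carrier Frac" using frac_add_closed by simp
next
  show "\<zero>\<^bsub>Frac\<^esub> \<in> carrier Frac" using frac_in_Frac one_S by simp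
next
  fix x y z assume "x \<in> carrier Frac" "y \<in> carrier Frac" "z \<in> carrier Frac"
  then obtain a1 s1 a2 s2 a3 s3 where h: "a1 \<in> carrier R" "s1 \<in> S" "x = frac_class a1 s1" "a2 \<in> carrier R"
    "s2 \<in> S" "y = frac_class a2 s2"
    "a3 \<in> carrier R" "s3 \<in> S" "z = frac_class a3 s3" by (metis FracE)
  obtain D x1 x2 x3 where c: "D \<in> S" "x1 \<in> carrier R" "x2 \<in> carrier R" "x3 \<in> carrier R"
    "frac_class a1 s1 = frac_class x1 D" "frac_class a2 s2 = frac_class x2 D"
      "frac_class a3 s3 = frac_class x3 D" using common_denominator3[OF h(2,5,8,1,4,7)] .
  show "(x \<oplus>\<^bsub>Frac\<^esub> y) \<oplus>\<^bsub>Frac\<^esub> z = x \<oplus>\<^bsub>Frac\<^esub> (y \<oplus>\<^bsub>Frac\<^esub> z)"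
    using c h by (simp add: frac_add_same_denom a_assoc)
next
  fix x y assume "x \<in> carrier Frac" "y \<in> carrier Frac"
  then obtain a1 s1 a2 s2 where h: "a1 \<in> carrier R" "s1 \<in> S" "x = frac_class a1 s1" "a2 \<in> carrier R" "s2 \<in> S"
    "y = frac_class a2 s2"
    by (metis FracE)
  obtain D x1 x2 where c: "D \<in> S" "x1 \<in> carrier R" "x2 \<in> carrier R" "frac_class a1 s1 = frac_class x1 D"
    "frac_class a2 s2 = frac_class x2 D"
    using common_denominator2[OF h(2,5,1,4)] .
  show "x \<oplus>\<^bsub>Frac\<^esub> y = y \<oplus>\<^bsub>Frac\<^esub> x" using c h by (simp add: frac_add_same_denom a_comm)
next
  fix x assume "x \<in> carrier Frac"
  then obtain a s where h: "a \<in> carrier R" "s \<in> S" "x = frac_class a s" by (metis FracE)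
  show "\<zero>\<^bsub>Frac\<^esub> \<oplus>\<^bsub>Frac\<^esub> x = x" using h frac_zero[OF h(2)] by (simp add: frac_add_same_denom)
next
  fix x assume "x \<in> carrier Frac"
  then obtain a s where h: "a \<in> carrier R" "s \<in> S" "x = frac_class a s" by (metis FracE)
  have "frac_class (\<ominus> a) s \<in> carrier Frac" using h by (intro frac_in_Frac) auto
  moreover have "frac_add (frac_class (\<ominus> a) s) x = \<zero>\<^bsub>Frac\<^esub>" using h frac_zero[OF h(2)]
    by (simp add: frac_add_same_denom l_neg)
  ultimately show "\<exists>y\<in>carrier Frac. y \<oplus>\<^bsub>Frac\<^esub> x = \<zero>\<^bsub>Frac\<^esub>" by auto
qed

lemma frac_mult_one_left:
  "a \<in> carrier R \<Longrightarrow> s \<in> S \<Longrightarrow> frac_mult (frac_class \<one> \<one>) (frac_class a s) = frac_class a s"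
  using frac_mult_frac[of \<one> \<one> a s a \<one>] one_S S_carrier by auto
lemma frac_mult_one_right:
  "a \<in> carrier R \<Longrightarrow> s \<in> S \<Longrightarrow> frac_mult (frac_class a s) (frac_class \<one> \<one>) = frac_class a s"
  using frac_mult_frac[of a s \<one> \<one> \<one> s] one_S S_carrier by auto

lemma monoid_Frac: "monoid Frac"
proof (rule monoidI)
  fix x y assume "x \<in> carrier Frac" "y \<in> carrier Frac"
  then show "x \<otimes>\<^bsub>Frac\<^esub> y \<in> carrier Frac" using frac_mult_closed by simp
next
  show "\<one>\<^bsub>Frac\<^esub> \<in> carrier Frac" using frac_in_Frac one_S by simp
next
  fix x y z assume "x \<in> carrier Frac" "y \<in> carrier Frac" "z \<in> carrier Frac"
  then obtain a1 s1 a2 s2 a3 s3 where h: "a1 \<in> carrier R" "s1 \<in> S" "x = frac_class a1 s1" "a2 \<in> carrier R"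
    "s2 \<in> S" "y = frac_class a2 s2"
    "a3 \<in> carrier R" "s3 \<in> S" "z = frac_class a3 s3" by (metis FracE)
  obtain t b where tb: "t \<in> S" "b \<in> carrier R" "a2 \<otimes> t = s1 \<otimes> b" using ore_condition[OF h(4,2)] by blast
  have s2t: "s2 \<otimes> t \<in> S" using mult_S h tb by auto
  obtain t' b' where tb': "t' \<in> S" "b' \<in> carrier R" "a3 \<otimes> t' = (s2 \<otimes> t) \<otimes> b'" using ore_condition[OF h(7) s2t]
    by blast
  have sc: "s1 \<in> carrier R" "s2 \<in> carrier R" "s3 \<in> carrier R" "t \<in> carrier R" "t' \<in> carrier R"
    using h tb tb' S_carrier by auto
  have xy: "frac_mult x y = frac_class (a1 \<otimes> b) (s2 \<otimes> t)" using frac_mult_frac h tb by auto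
  have xyz: "frac_mult (frac_mult x y) z = frac_class (a1 \<otimes> b \<otimes> b') (s3 \<otimes> t')"
    unfolding xy using frac_mult_frac[of "a1 \<otimes> b" "s2 \<otimes> t" a3 s3 b' t'] h tb tb' s2t by auto
  have e: "a3 \<otimes> t' = s2 \<otimes> (t \<otimes> b')" using tb' sc by (simp add: m_assoc)
  have yz: "frac_mult y z = frac_class (a2 \<otimes> (t \<otimes> b')) (s3 \<otimes> t')"
    using frac_mult_frac[OF h(4,5,7,8) _ tb'(1) e] tb tb' sc h by auto
  have e2: "(a2 \<otimes> (t \<otimes> b')) \<otimes> \<one> = s1 \<otimes> (b \<otimes> b')"
  proof -
    have "(a2 \<otimes> (t \<otimes> b')) \<otimes> \<one> = (a2 \<otimes> t) \<otimes> b'" using h(4) sc tb(2) tb'(2) by (simp add: m_assoc)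
    also have "\<dots> = (s1 \<otimes> b) \<otimes> b'" using tb(3) by simp
    also have "\<dots> = s1 \<otimes> (b \<otimes> b')" using h sc tb(2) tb'(2) by (simp add: m_assoc)
    finally show ?thesis .
  qed
  have "frac_mult x (frac_mult y z) = frac_class (a1 \<otimes> (b \<otimes> b')) ((s3 \<otimes> t') \<otimes> \<one>)"
    unfolding yz using frac_mult_frac[of a1 s1 "a2 \<otimes> (t \<otimes> b')" "s3 \<otimes> t'" "b \<otimes> b'" \<one>, OF _ _ _ _ _ _ e2]
      h tb tb' sc mult_S one_S by auto
  then show "(x \<otimes>\<^bsub>Frac\<^esub> y) \<otimes>\<^bsub>Frac\<^esub> z = x \<otimes>\<^bsub>Frac\<^esub> (y \<otimes>\<^bsub>Frac\<^esub> z)"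
    using xyz h tb tb' sc by (simp add: m_assoc)
next
  fix x assume "x \<in> carrier Frac"
  then obtain a s where h: "a \<in> carrier R" "s \<in> S" "x = frac_class a s" by (metis FracE)
  show "\<one>\<^bsub>Frac\<^esub> \<otimes>\<^bsub>Frac\<^esub> x = x" using h frac_mult_one_left by simp
  show "x \<otimes>\<^bsub>Frac\<^esub> \<one>\<^bsub>Frac\<^esub> = x" using h frac_mult_one_right by simp
qed

lemma ring_Frac: "ring Frac"
proof (rule ringI[OF abelian_group_Frac monoid_Frac])
  fix x y z assume "x \<in> carrier Frac" "y \<in> carrier Frac" "z \<in> carrier Frac"
  then obtain a1 s1 a2 s2 a3 s3 where h: "a1 \<in> carrier R" "s1 \<in> S" "x = frac_class a1 s1" "a2 \<in> carrier R"
    "s2 \<in> S" "y = frac_class a2 s2"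
    "a3 \<in> carrier R" "s3 \<in> S" "z = frac_class a3 s3" by (metis FracE)
  obtain D x1 x2 where c: "D \<in> S" "x1 \<in> carrier R" "x2 \<in> carrier R" "x = frac_class x1 D"
    "y = frac_class x2 D"
    using common_denominator2[OF h(2,5,1,4)] h by metis
  have Dc: "D \<in> carrier R" "s3 \<in> carrier R" using c h S_carrier by auto
  obtain t b where tb: "t \<in> S" "b \<in> carrier R" "a3 \<otimes> t = D \<otimes> b" using ore_condition[OF h(7) c(1)] by blast
  have "frac_mult (frac_add x y) z = frac_class ((x1 \<oplus> x2) \<otimes> b) (s3 \<otimes> t)"
    using c h frac_add_same_denom frac_mult_frac[of "x1 \<oplus> x2" D a3 s3 b t] tb by auto
  moreover have "frac_add (frac_mult x z) (frac_mult y z) = frac_class (x1 \<otimes> b \<oplus> x2 \<otimes> b) (s3 \<otimes> t)"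
    using c h frac_mult_frac[of x1 D a3 s3 b t] frac_mult_frac[of x2 D a3 s3 b t] tb frac_add_same_denom
      mult_S by auto
  ultimately show "(x \<oplus>\<^bsub>Frac\<^esub> y) \<otimes>\<^bsub>Frac\<^esub> z = x \<otimes>\<^bsub>Frac\<^esub> z \<oplus>\<^bsub>Frac\<^esub> y \<otimes>\<^bsub>Frac\<^esub> z"
    using c tb by (simp add: l_distr)
  obtain t1 b1 where tb1: "t1 \<in> S" "b1 \<in> carrier R" "x1 \<otimes> t1 = s3 \<otimes> b1" using ore_condition[OF c(2) h(8)]
    by blast
  have t1c: "t1 \<in> carrier R" using tb1 S_carrier by auto
  have x2t: "x2 \<otimes> t1 \<in> carrier R" using c t1c by auto
  obtain t2 b2 where tb2: "t2 \<in> S" "b2 \<in> carrier R" "(x2 \<otimes> t1) \<otimes> t2 = s3 \<otimes> b2"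
    using ore_condition[OF x2t h(8)] by blast
  have t2c: "t2 \<in> carrier R" using tb2 S_carrier by auto
  have T: "t1 \<otimes> t2 \<in> S" using mult_S tb1 tb2 by auto
  have e1: "x1 \<otimes> (t1 \<otimes> t2) = s3 \<otimes> (b1 \<otimes> t2)" using tb1 c t1c t2c Dc by (simp add: m_assoc[symmetric])
  have e2: "x2 \<otimes> (t1 \<otimes> t2) = s3 \<otimes> b2" using tb2 c t1c t2c Dc by (simp add: m_assoc)
  have e3: "(x1 \<oplus> x2) \<otimes> (t1 \<otimes> t2) = s3 \<otimes> (b1 \<otimes> t2 \<oplus> b2)"
    using e1 e2 c t1c t2c Dc tb1 tb2 by (simp add: l_distr r_distr)
  have "frac_mult z (frac_add x y) = frac_class (a3 \<otimes> (b1 \<otimes> t2 \<oplus> b2)) (D \<otimes> (t1 \<otimes> t2))"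
    using c h frac_add_same_denom frac_mult_frac[of a3 s3 "x1 \<oplus> x2" D "b1 \<otimes> t2 \<oplus> b2" "t1 \<otimes> t2", OF _ _ _ _ _ T
      e3] tb1 tb2 t2c by auto
  moreover have "frac_mult z x = frac_class (a3 \<otimes> (b1 \<otimes> t2)) (D \<otimes> (t1 \<otimes> t2))"
    using c h frac_mult_frac[of a3 s3 x1 D "b1 \<otimes> t2" "t1 \<otimes> t2", OF _ _ _ _ _ T e1] tb1 t2c by auto
  moreover have "frac_mult z y = frac_class (a3 \<otimes> b2) (D \<otimes> (t1 \<otimes> t2))"
    using c h frac_mult_frac[of a3 s3 x2 D b2 "t1 \<otimes> t2", OF _ _ _ _ _ T e2] tb2 by auto
  ultimately show "z \<otimes>\<^bsub>Frac\<^esub> (x \<oplus>\<^bsub>Frac\<^esub> y) = z \<otimes>\<^bsub>Frac\<^esub> x \<oplus>\<^bsub>Frac\<^esub> z \<otimes>\<^bsub>Frac\<^esub> y"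
    using c h tb1 tb2 t2c T mult_S frac_add_same_denom by (simp add: r_distr)
qed

lemma module_Frac: "module C_ring Frac"
proof (rule moduleI)
  show "cring C_ring" using cx_module unfolding module_def by auto
  show "abelian_group Frac" by (rule abelian_group_Frac)
next
  fix a x assume "a \<in> carrier C_ring" "x \<in> carrier Frac"
  then obtain z s where h: "z \<in> carrier R" "s \<in> S" "x = frac_class z s" by (metis FracE)
  then show "a \<odot>\<^bsub>Frac\<^esub> x \<in> carrier Frac" using frac_smult_frac smult_closed frac_in_Frac[of "a \<odot>\<^bsub>R\<^esub> z" s] by simp
next
  fix a b x assume "a \<in> carrier C_ring" "b \<in> carrier C_ring" "x \<in> carrier Frac"
  then obtain z s where h: "z \<in> carrier R" "s \<in> S" "x = frac_class z s" by (metis FracE)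
  have "(a + b) \<odot>\<^bsub>R\<^esub> z = a \<odot>\<^bsub>R\<^esub> z \<oplus> b \<odot>\<^bsub>R\<^esub> z" using module.smult_l_distr[OF cx_module, of a b z] h by simp
  then show "(a \<oplus>\<^bsub>C_ring\<^esub> b) \<odot>\<^bsub>Frac\<^esub> x = a \<odot>\<^bsub>Frac\<^esub> x \<oplus>\<^bsub>Frac\<^esub> b \<odot>\<^bsub>Frac\<^esub> x"
    using h frac_smult_frac frac_add_same_denom smult_closed by simp
next
  fix a x y assume "a \<in> carrier C_ring" "x \<in> carrier Frac" "y \<in> carrier Frac"
  then obtain a1 s1 a2 s2 where h: "a1 \<in> carrier R" "s1 \<in> S" "x = frac_class a1 s1" "a2 \<in> carrier R" "s2 \<in> S"
    "y = frac_class a2 s2"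
    by (metis FracE)
  obtain D x1 x2 where c: "D \<in> S" "x1 \<in> carrier R" "x2 \<in> carrier R" "x = frac_class x1 D"
    "y = frac_class x2 D"
    using common_denominator2[OF h(2,5,1,4)] h by metis
  have "a \<odot>\<^bsub>R\<^esub> (x1 \<oplus> x2) = a \<odot>\<^bsub>R\<^esub> x1 \<oplus> a \<odot>\<^bsub>R\<^esub> x2" using module.smult_r_distr[OF cx_module, of a x1 x2] c by simp
  then show "a \<odot>\<^bsub>Frac\<^esub> (x \<oplus>\<^bsub>Frac\<^esub> y) = a \<odot>\<^bsub>Frac\<^esub> x \<oplus>\<^bsub>Frac\<^esub> a \<odot>\<^bsub>Frac\<^esub> y"
    using c frac_smult_frac frac_add_same_denom smult_closed by simp
next
  fix a b x assume "a \<in> carrier C_ring" "b \<in> carrier C_ring" "x \<in> carrier Frac"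
  then obtain z s where h: "z \<in> carrier R" "s \<in> S" "x = frac_class z s" by (metis FracE)
  have "(a * b) \<odot>\<^bsub>R\<^esub> z = a \<odot>\<^bsub>R\<^esub> (b \<odot>\<^bsub>R\<^esub> z)" using module.smult_assoc1[OF cx_module, of a b z] h by simp
  then show "(a \<otimes>\<^bsub>C_ring\<^esub> b) \<odot>\<^bsub>Frac\<^esub> x = a \<odot>\<^bsub>Frac\<^esub> (b \<odot>\<^bsub>Frac\<^esub> x)"
    using h frac_smult_frac smult_closed by simp
next
  fix x assume "x \<in> carrier Frac"
  then obtain z s where h: "z \<in> carrier R" "s \<in> S" "x = frac_class z s" by (metis FracE)
  have "1 \<odot>\<^bsub>R\<^esub> z = z" using module.smult_one[OF cx_module, of z] h by simp
  then show "\<one>\<^bsub>C_ring\<^esub> \<odot>\<^bsub>Frac\<^esub> x = x" using h frac_smult_frac by simp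
qed

lemma cx_algebra_Frac: "cx_algebra Frac"
  unfolding cx_algebra_def
proof (intro conjI allI impI)
  show "ring Frac" by (rule ring_Frac)
  show "module C_ring Frac" by (rule module_Frac)
  fix c x y assume "x \<in> carrier Frac" "y \<in> carrier Frac"
  then obtain a s a' s' where h: "a \<in> carrier R" "s \<in> S" "x = frac_class a s" "a' \<in> carrier R" "s' \<in> S"
    "y = frac_class a' s'"
    by (metis FracE)
  obtain t b where tb: "t \<in> S" "b \<in> carrier R" "a' \<otimes> t = s \<otimes> b" using ore_condition[OF h(4,2)] by blast
  have tc: "t \<in> carrier R" "s \<in> carrier R" using tb h S_carrier by auto
  have "frac_mult (frac_smult c x) y = frac_class ((c \<odot>\<^bsub>R\<^esub> a) \<otimes> b) (s' \<otimes> t)"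
    using h frac_smult_frac frac_mult_frac[of "c \<odot>\<^bsub>R\<^esub> a" s a' s' b t] tb smult_closed by auto
  moreover have "frac_smult c (frac_mult x y) = frac_class (c \<odot>\<^bsub>R\<^esub> (a \<otimes> b)) (s' \<otimes> t)"
    using h frac_smult_frac frac_mult_frac[of a s a' s' b t] tb mult_S by auto
  ultimately show "(c \<odot>\<^bsub>Frac\<^esub> x) \<otimes>\<^bsub>Frac\<^esub> y = c \<odot>\<^bsub>Frac\<^esub> (x \<otimes>\<^bsub>Frac\<^esub> y)"
    using h tb by (simp add: smult_mult_left)
  have e: "(c \<odot>\<^bsub>R\<^esub> a') \<otimes> t = s \<otimes> (c \<odot>\<^bsub>R\<^esub> b)" using tb h tc by (simp add: smult_mult_left smult_mult_right)
  have "frac_mult x (frac_smult c y) = frac_class (a \<otimes> (c \<odot>\<^bsub>R\<^esub> b)) (s' \<otimes> t)"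
    using h frac_smult_frac frac_mult_frac[of a s "c \<odot>\<^bsub>R\<^esub> a'" s' "c \<odot>\<^bsub>R\<^esub> b" t, OF _ _ _ _ _ _ e] tb smult_closed
      by auto
  moreover have "frac_smult c (frac_mult x y) = frac_class (c \<odot>\<^bsub>R\<^esub> (a \<otimes> b)) (s' \<otimes> t)"
    using h frac_smult_frac frac_mult_frac[of a s a' s' b t] tb mult_S by auto
  ultimately show "x \<otimes>\<^bsub>Frac\<^esub> (c \<odot>\<^bsub>Frac\<^esub> y) = c \<odot>\<^bsub>Frac\<^esub> (x \<otimes>\<^bsub>Frac\<^esub> y)"
    using h tb by (simp add: smult_mult_right)
qed

definition frac_of :: "'a \<Rightarrow> ('a \<times> 'a) set" where "frac_of a = frac_class a \<one>"

lemma ring_hom_frac_of: "frac_of \<in> ring_hom R Frac"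
proof (rule ring_hom_memI)
  fix x assume "x \<in> carrier R" then show "frac_of x \<in> carrier Frac" unfolding frac_of_def
    using frac_in_Frac one_S by simp
next
  fix x y assume h: "x \<in> carrier R" "y \<in> carrier R"
  show "frac_of (x \<otimes> y) = frac_of x \<otimes>\<^bsub>Frac\<^esub> frac_of y" unfolding frac_of_def
    using frac_mult_frac[of x \<one> y \<one> y \<one>] h one_S by simp
  show "frac_of (x \<oplus> y) = frac_of x \<oplus>\<^bsub>Frac\<^esub> frac_of y" unfolding frac_of_def using frac_add_same_denom h one_S
    by simp
next
  show "frac_of \<one> = \<one>\<^bsub>Frac\<^esub>" unfolding frac_of_def by simp
qed

lemma frac_of_Units: assumes "s \<in> S" shows "frac_of s \<in> Units Frac" and "inv\<^bsub>Frac\<^esub> (frac_of s) = frac_class \<one> s"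
proof -
  have sc: "s \<in> carrier R" using assms S_carrier by auto
  have 1: "frac_mult (frac_class s \<one>) (frac_class \<one> s) = \<one>\<^bsub>Frac\<^esub>"
  proof -
    have "frac_mult (frac_class s \<one>) (frac_class \<one> s) = frac_class (s \<otimes> \<one>) (s \<otimes> \<one>)"
      using frac_mult_frac[of s \<one> \<one> s \<one> \<one>] sc assms one_S by simp
    also have "\<dots> = frac_class \<one> \<one>" using frac_expand[of \<one> \<one> s] sc assms one_S by simp
    finally show ?thesis by simp
  qed
  have 2: "frac_mult (frac_class \<one> s) (frac_class s \<one>) = \<one>\<^bsub>Frac\<^esub>"
    using frac_mult_frac[of \<one> s s \<one> \<one> \<one>] sc assms one_S by simp
  have c: "frac_class s \<one> \<in> carrier Frac" "frac_class \<one> s \<in> carrier Frac" using frac_in_Frac sc assms one_S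
    by auto
  show "frac_of s \<in> Units Frac" unfolding frac_of_def Units_def using 1 2 c by auto
  show "inv\<^bsub>Frac\<^esub> (frac_of s) = frac_class \<one> s" unfolding frac_of_def
    using monoid.inv_char[OF monoid_Frac c] 1 2 by simp
qed

lemma ore_localization_Frac: "ore_localization R S Frac frac_of"
  unfolding ore_localization_def
proof (intro conjI ballI allI)
  show "cx_algebra Frac" by (rule cx_algebra_Frac)
  show "frac_of \<in> ring_hom R Frac" by (rule ring_hom_frac_of)
  fix c x assume "x \<in> carrier R" then show "frac_of (c \<odot>\<^bsub>R\<^esub> x) = c \<odot>\<^bsub>Frac\<^esub> frac_of x"
    unfolding frac_of_def using frac_smult_frac one_S by simp
next
  fix s assume "s \<in> S" then show "frac_of s \<in> Units Frac" by (rule frac_of_Units)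
next
  fix y assume "y \<in> carrier Frac"
  then obtain a s where h: "a \<in> carrier R" "s \<in> S" "y = frac_class a s" by (metis FracE)
  have "frac_of a \<otimes>\<^bsub>Frac\<^esub> inv\<^bsub>Frac\<^esub> (frac_of s) = frac_class a s"
    using frac_of_Units(2)[OF h(2)] frac_mult_frac[of a \<one> \<one> s \<one> \<one>] h one_S S_carrier unfolding frac_of_def
      by simp
  then show "\<exists>a\<in>carrier R. \<exists>s\<in>S. y = frac_of a \<otimes>\<^bsub>Frac\<^esub> inv\<^bsub>Frac\<^esub> (frac_of s)" using h by metis
next
  fix a assume a: "a \<in> carrier R"
  have "frac_of a = \<zero>\<^bsub>Frac\<^esub> \<longleftrightarrow> frac_rel (a,\<one>) (\<zero>,\<one>)" unfolding frac_of_def using frac_eq_iff a one_S by simp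
  also have "\<dots> \<longleftrightarrow> (\<exists>s\<in>S. a \<otimes> s = \<zero>)"
  proof
    assume "frac_rel (a,\<one>) (\<zero>,\<one>)"
    then obtain b b' where "b \<in> carrier R" "b' \<in> carrier R" "\<one> \<otimes> b = \<one> \<otimes> b'" "\<one> \<otimes> b \<in> S" "a \<otimes> b = \<zero> \<otimes> b'"
      unfolding frac_rel_def by auto
    then show "\<exists>s\<in>S. a \<otimes> s = \<zero>" by auto
  next
    assume "\<exists>s\<in>S. a \<otimes> s = \<zero>"
    then obtain s where "s \<in> S" "a \<otimes> s = \<zero>" by blast
    then show "frac_rel (a,\<one>) (\<zero>,\<one>)" unfolding frac_rel_def using S_carrier by (intro bexI[of _ s]) auto
  qed
  finally show "frac_of a = \<zero>\<^bsub>Frac\<^esub> \<longleftrightarrow> (\<exists>s\<in>S. a \<otimes> s = \<zero>)" .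
qed

end

section \<open>NC-nilpotent algebras\<close>

locale nilpotent_algebra = complex_algebra + fixes N :: nat assumes NCF_N_trivial: "NCF A N = {\<zero>}"
begin

lemma ad_pow_N_zero: "t \<in> carrier A \<Longrightarrow> x \<in> carrier A \<Longrightarrow> ((comm A t) ^^ N) x = \<zero>"
  using ad_pow_in_NCF[of t x N] NCF_N_trivial by auto

lemma ore_in_ideal_subspace: assumes "ideal_subspace J" "x \<in> J" "t \<in> carrier A"
  shows "\<exists>b\<in>J. x \<otimes> t [^] N = t \<otimes> b"
proof -
  have "x \<in> carrier A" using assms unfolding ideal_subspace_def subspace_def by auto
  then show ?thesis using ad_nilpotent_ore[OF assms(1,3), of N] ad_pow_N_zero assms by blast
qed

lemma right_reversible: assumes "s \<in> carrier A" "y \<in> carrier A" "s \<otimes> y = \<zero>" shows "y \<otimes> s [^] N = \<zero>"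
  using ad_nilpotent_reversible[OF assms(1), of N] ad_pow_N_zero assms by blast

lemma submonoid_right_denominator_set:
  assumes S: "S \<subseteq> carrier A" "\<one> \<in> S" "\<And>s t. \<lbrakk>s \<in> S; t \<in> S\<rbrakk> \<Longrightarrow> s \<otimes> t \<in> S"
  shows "right_denominator_set A S"
proof -
  have pow_S: "s \<in> S \<Longrightarrow> s [^] (n::nat) \<in> S" for s n
    by (induction n) (use S in auto)
  show ?thesis
  proof (intro right_denominator_set.intro right_denominator_set_axioms.intro)
    show "complex_algebra A" by (rule complex_algebra_axioms)
  next
    fix a s assume as: "a \<in> carrier A" "s \<in> S"
    then have "s \<in> carrier A" using S(1) by blast
    then obtain b where "b \<in> carrier A" "a \<otimes> s [^] N = s \<otimes> b"
      using ore_in_ideal_subspace[OF ideal_subspace_carrier as(1)] by blast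
    moreover have "s [^] N \<in> S" using pow_S[OF as(2)] .
    ultimately show "\<exists>t\<in>S. \<exists>b\<in>carrier A. a \<otimes> t = s \<otimes> b" by blast
  next
    fix s a assume sa: "s \<in> S" "a \<in> carrier A" "s \<otimes> a = \<zero>"
    then have "a \<otimes> s [^] N = \<zero>" using right_reversible[OF _ sa(2,3)] S(1) by blast
    then show "\<exists>t\<in>S. a \<otimes> t = \<zero>" using pow_S[OF sa(1)] by blast
  qed (use S in auto)
qed

end

section \<open>Ore localizations of NC-nilpotent algebras\<close>

locale localization_of_nilpotent = nilpotent_algebra A N for A :: "(complex,'a) module" (structure) and N +
  fixes S :: "'a set" and B :: "(complex,'b) module" and \<phi> :: "'a \<Rightarrow> 'b"
  assumes loc: "ore_localization A S B \<phi>" and S_subset: "S \<subseteq> carrier A" and one_S: "\<one> \<in> S"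
    and mult_S: "\<lbrakk>s \<in> S; t \<in> S\<rbrakk> \<Longrightarrow> s \<otimes> t \<in> S"
begin

lemma cx_algebra_B: "cx_algebra B" using loc unfolding ore_localization_def by auto
lemma ring_B: "ring B" using cx_algebra_B unfolding cx_algebra_def by auto

sublocale B: complex_algebra B by (rule complex_algebraI[OF cx_algebra_B])

lemma hom_phi: "\<phi> \<in> ring_hom A B" using loc unfolding ore_localization_def by auto
lemma phi_closed[simp]: "x \<in> carrier A \<Longrightarrow> \<phi> x \<in> carrier B" using ring_hom_closed[OF hom_phi] .
lemma phi_mult: "x \<in> carrier A \<Longrightarrow> y \<in> carrier A \<Longrightarrow> \<phi> (x \<otimes> y) = \<phi> x \<otimes>\<^bsub>B\<^esub> \<phi> y"
  using ring_hom_mult[OF hom_phi] by simp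
lemma phi_add: "x \<in> carrier A \<Longrightarrow> y \<in> carrier A \<Longrightarrow> \<phi> (x \<oplus> y) = \<phi> x \<oplus>\<^bsub>B\<^esub> \<phi> y"
  using ring_hom_add[OF hom_phi] by simp
lemma phi_one[simp]: "\<phi> \<one> = \<one>\<^bsub>B\<^esub>" using ring_hom_one[OF hom_phi] .
lemma phi_zero[simp]: "\<phi> \<zero> = \<zero>\<^bsub>B\<^esub>" using ring_hom_zero[OF hom_phi] ring_axioms ring_B by blast
lemma phi_neg: "x \<in> carrier A \<Longrightarrow> \<phi> (\<ominus> x) = \<ominus>\<^bsub>B\<^esub> \<phi> x"
proof -
  assume x: "x \<in> carrier A"
  have "\<phi> (\<ominus> x) \<oplus>\<^bsub>B\<^esub> \<phi> x = \<zero>\<^bsub>B\<^esub>" using phi_add[of "\<ominus> x" x] x by (simp add: l_neg)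
  then show ?thesis using x by (simp add: B.minus_equality)
qed
lemma phi_minus: "x \<in> carrier A \<Longrightarrow> y \<in> carrier A \<Longrightarrow> \<phi> (x \<ominus> y) = \<phi> x \<ominus>\<^bsub>B\<^esub> \<phi> y"
  by (simp add: minus_eq B.minus_eq phi_add phi_neg)
lemma phi_smult: "x \<in> carrier A \<Longrightarrow> \<phi> (c \<odot>\<^bsub>A\<^esub> x) = c \<odot>\<^bsub>B\<^esub> \<phi> x"
  using loc unfolding ore_localization_def by auto
lemma phi_comm: "x \<in> carrier A \<Longrightarrow> y \<in> carrier A \<Longrightarrow> \<phi> (comm A x y) = comm B (\<phi> x) (\<phi> y)"
  unfolding comm_def by (simp add: phi_minus phi_mult)

lemma S_carrier: "s \<in> S \<Longrightarrow> s \<in> carrier A" using S_subset by auto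
lemma pow_S: "s \<in> S \<Longrightarrow> s [^] (n::nat) \<in> S" by (induction n) (auto simp: one_S mult_S)

definition inv_phi :: "'a \<Rightarrow> 'b" where "inv_phi s = inv\<^bsub>B\<^esub> (\<phi> s)"

lemma phi_S_Units: "s \<in> S \<Longrightarrow> \<phi> s \<in> Units B" using loc unfolding ore_localization_def by auto
lemma inv_phi_closed[simp]: "s \<in> S \<Longrightarrow> inv_phi s \<in> carrier B" unfolding inv_phi_def using phi_S_Units by auto
lemma inv_phi_l[simp]: "s \<in> S \<Longrightarrow> inv_phi s \<otimes>\<^bsub>B\<^esub> \<phi> s = \<one>\<^bsub>B\<^esub>" unfolding inv_phi_def using phi_S_Units by auto
lemma inv_phi_r[simp]: "s \<in> S \<Longrightarrow> \<phi> s \<otimes>\<^bsub>B\<^esub> inv_phi s = \<one>\<^bsub>B\<^esub>" unfolding inv_phi_def using phi_S_Units by auto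
lemma inv_phi_one[simp]: "inv_phi \<one> = \<one>\<^bsub>B\<^esub>" unfolding inv_phi_def by simp
lemma phi_inv_phi_cancel[simp]: "s \<in> S \<Longrightarrow> x \<in> carrier B \<Longrightarrow> \<phi> s \<otimes>\<^bsub>B\<^esub> (inv_phi s \<otimes>\<^bsub>B\<^esub> x) = x"
  using B.m_assoc[of "\<phi> s" "inv_phi s" x] S_carrier by simp
lemma inv_phi_phi_cancel[simp]: "s \<in> S \<Longrightarrow> x \<in> carrier B \<Longrightarrow> inv_phi s \<otimes>\<^bsub>B\<^esub> (\<phi> s \<otimes>\<^bsub>B\<^esub> x) = x"
  using B.m_assoc[of "inv_phi s" "\<phi> s" x] S_carrier by simp

lemma fraction_repr: "y \<in> carrier B \<Longrightarrow> \<exists>a\<in>carrier A. \<exists>s\<in>S. y = \<phi> a \<otimes>\<^bsub>B\<^esub> inv_phi s"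
  using loc unfolding ore_localization_def inv_phi_def by auto

lemma inv_phi_mult: assumes "s \<in> S" "t \<in> S" shows "inv_phi (s \<otimes> t) = inv_phi t \<otimes>\<^bsub>B\<^esub> inv_phi s"
proof -
  have st: "s \<otimes> t \<in> S" using mult_S assms by auto
  have c: "\<phi> s \<in> carrier B" "\<phi> t \<in> carrier B" using assms S_carrier by auto
  have "inv_phi (s \<otimes> t) = inv_phi (s \<otimes> t) \<otimes>\<^bsub>B\<^esub> (\<phi> (s \<otimes> t) \<otimes>\<^bsub>B\<^esub> (inv_phi t \<otimes>\<^bsub>B\<^esub> inv_phi s))"
  proof -
    have "\<phi> (s \<otimes> t) \<otimes>\<^bsub>B\<^esub> (inv_phi t \<otimes>\<^bsub>B\<^esub> inv_phi s) = \<phi> s \<otimes>\<^bsub>B\<^esub> ((\<phi> t \<otimes>\<^bsub>B\<^esub> inv_phi t) \<otimes>\<^bsub>B\<^esub> inv_phi s)"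
      using assms S_carrier c by (simp add: phi_mult B.m_assoc)
    also have "\<dots> = \<one>\<^bsub>B\<^esub>" using assms c by simp
    finally show ?thesis using st by simp
  qed
  also have "\<dots> = (inv_phi (s \<otimes> t) \<otimes>\<^bsub>B\<^esub> \<phi> (s \<otimes> t)) \<otimes>\<^bsub>B\<^esub> (inv_phi t \<otimes>\<^bsub>B\<^esub> inv_phi s)"
    using st assms S_carrier by (simp add: B.m_assoc)
  also have "\<dots> = inv_phi t \<otimes>\<^bsub>B\<^esub> inv_phi s" using st assms by simp
  finally show ?thesis .
qed

lemma inv_phi_expand: assumes "s \<in> S" "d \<in> S" "c \<in> carrier A" "s \<otimes> c = d" shows "inv_phi s = \<phi> c \<otimes>\<^bsub>B\<^esub> inv_phi d"
proof -
  have sc: "\<phi> s \<in> carrier B" "\<phi> c \<in> carrier B" using assms S_carrier by auto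
  have "\<phi> c = inv_phi s \<otimes>\<^bsub>B\<^esub> \<phi> d"
  proof -
    have "inv_phi s \<otimes>\<^bsub>B\<^esub> \<phi> d = inv_phi s \<otimes>\<^bsub>B\<^esub> (\<phi> s \<otimes>\<^bsub>B\<^esub> \<phi> c)" using assms S_carrier phi_mult by metis
    also have "\<dots> = \<phi> c" using assms sc by (simp add: B.m_assoc[symmetric])
    finally show ?thesis by simp
  qed
  then have "\<phi> c \<otimes>\<^bsub>B\<^esub> inv_phi d = inv_phi s \<otimes>\<^bsub>B\<^esub> (\<phi> d \<otimes>\<^bsub>B\<^esub> inv_phi d)" using assms S_carrier
    by (simp add: B.m_assoc)
  then show ?thesis using assms by simp
qed

lemma inv_phi_mult_swap: assumes J: "ideal_subspace J" and f: "f \<in> J" and s: "s \<in> S"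
  shows "\<exists>f'\<in>J. \<exists>s'\<in>S. inv_phi s \<otimes>\<^bsub>B\<^esub> \<phi> f = \<phi> f' \<otimes>\<^bsub>B\<^esub> inv_phi s'"
proof -
  have sc: "s \<in> carrier A" using s S_carrier by auto
  obtain b where b: "b \<in> J" "f \<otimes> s [^] N = s \<otimes> b" using ore_in_ideal_subspace[OF J f sc] by blast
  have fc: "f \<in> carrier A" "b \<in> carrier A" using J f b unfolding ideal_subspace_def subspace_def by auto
  have sN: "s [^] N \<in> S" using pow_S s by auto
  have e: "\<phi> f \<otimes>\<^bsub>B\<^esub> \<phi> (s [^] N) = \<phi> s \<otimes>\<^bsub>B\<^esub> \<phi> b" using b(2) fc sc by (metis phi_mult nat_pow_closed)
  have "inv_phi s \<otimes>\<^bsub>B\<^esub> \<phi> f = inv_phi s \<otimes>\<^bsub>B\<^esub> (\<phi> f \<otimes>\<^bsub>B\<^esub> \<phi> (s [^] N)) \<otimes>\<^bsub>B\<^esub> inv_phi (s [^] N)"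
    using fc sc sN s by (simp add: B.m_assoc)
  also have "\<dots> = inv_phi s \<otimes>\<^bsub>B\<^esub> (\<phi> s \<otimes>\<^bsub>B\<^esub> \<phi> b) \<otimes>\<^bsub>B\<^esub> inv_phi (s [^] N)" using e by simp
  also have "\<dots> = \<phi> b \<otimes>\<^bsub>B\<^esub> inv_phi (s [^] N)" using fc sc sN s by (simp add: B.m_assoc[symmetric])
  finally show ?thesis using b(1) sN by blast
qed

text \<open>By \<open>NCF_least\<close> this filtration of \<open>B\<close> contains the NC-filtration of \<open>B\<close>.\<close>
definition frac_filtration :: "nat \<Rightarrow> 'b set" where
  "frac_filtration k = {y. \<exists>f\<in>NCF A k. \<exists>s\<in>S. y = \<phi> f \<otimes>\<^bsub>B\<^esub> inv_phi s}"

lemma frac_filtration_subset_carrier: "frac_filtration k \<subseteq> carrier B" unfolding frac_filtration_def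
  using NCF_closed by auto

lemma frac_filtration_fraction: "f \<in> NCF A k \<Longrightarrow> s \<in> S \<Longrightarrow> \<phi> f \<otimes>\<^bsub>B\<^esub> inv_phi s \<in> frac_filtration k"
  unfolding frac_filtration_def by blast
lemma frac_filtration_phi: "f \<in> NCF A k \<Longrightarrow> \<phi> f \<in> frac_filtration k"
  using frac_filtration_fraction[of f k \<one>] one_S NCF_closed by auto

lemma carrier_subset_frac_filtration_0: "carrier B \<subseteq> frac_filtration 0" using fraction_repr carrier_in_NCF_0
  unfolding frac_filtration_def by blast

lemma frac_filtration_N_trivial: "frac_filtration N \<subseteq> {\<zero>\<^bsub>B\<^esub>}" unfolding frac_filtration_def using NCF_N_trivial
  by auto

lemma subspace_frac_filtration: "B.subspace (frac_filtration k)"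
  unfolding B.subspace_def
proof (intro conjI ballI allI impI)
  show "frac_filtration k \<subseteq> carrier B" by (rule frac_filtration_subset_carrier)
  show "\<zero>\<^bsub>B\<^esub> \<in> frac_filtration k" using frac_filtration_phi[of \<zero> k] subspaceD(2)[OF subspace_NCF] by simp
next
  fix x y assume "x \<in> frac_filtration k" "y \<in> frac_filtration k"
  then obtain f1 s1 f2 s2 where h: "f1 \<in> NCF A k" "s1 \<in> S" "x = \<phi> f1 \<otimes>\<^bsub>B\<^esub> inv_phi s1"
    "f2 \<in> NCF A k" "s2 \<in> S" "y = \<phi> f2 \<otimes>\<^bsub>B\<^esub> inv_phi s2" unfolding frac_filtration_def by blast
  have c: "s1 \<in> carrier A" "s2 \<in> carrier A" "f1 \<in> carrier A" "f2 \<in> carrier A"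
    using h S_carrier NCF_subset_carrier by auto
  obtain b where b: "b \<in> carrier A" "s2 \<otimes> s1 [^] N = s1 \<otimes> b"
    using ore_in_ideal_subspace[OF ideal_subspace_carrier c(2) c(1)] by blast
  define D where "D = s2 \<otimes> s1 [^] N"
  have DS: "D \<in> S" unfolding D_def using mult_S pow_S h by auto
  have u1: "inv_phi s1 = \<phi> b \<otimes>\<^bsub>B\<^esub> inv_phi D" using inv_phi_expand[OF h(2) DS b(1)] b(2) D_def by simp
  have u2: "inv_phi s2 = \<phi> (s1 [^] N) \<otimes>\<^bsub>B\<^esub> inv_phi D" using inv_phi_expand[OF h(5) DS] c D_def by simp
  have "x \<oplus>\<^bsub>B\<^esub> y = \<phi> (f1 \<otimes> b \<oplus> f2 \<otimes> s1 [^] N) \<otimes>\<^bsub>B\<^esub> inv_phi D"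
    using h c b DS unfolding u1 u2 by (simp add: phi_add phi_mult B.m_assoc B.l_distr)
  moreover have "f1 \<otimes> b \<oplus> f2 \<otimes> s1 [^] N \<in> NCF A k"
    using NCF_ideal h b c subspaceD(3)[OF subspace_NCF] by simp
  ultimately show "x \<oplus>\<^bsub>B\<^esub> y \<in> frac_filtration k" using frac_filtration_fraction DS by simp
next
  fix c x assume "x \<in> frac_filtration k"
  then obtain f s where h: "f \<in> NCF A k" "s \<in> S" "x = \<phi> f \<otimes>\<^bsub>B\<^esub> inv_phi s" unfolding frac_filtration_def by blast
  have fc: "f \<in> carrier A" using h NCF_subset_carrier by auto
  have "c \<odot>\<^bsub>B\<^esub> x = \<phi> (c \<odot>\<^bsub>A\<^esub> f) \<otimes>\<^bsub>B\<^esub> inv_phi s" using h fc by (simp add: phi_smult B.smult_mult_left)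
  then show "c \<odot>\<^bsub>B\<^esub> x \<in> frac_filtration k" using frac_filtration_fraction h subspaceD(4)[OF subspace_NCF]
    by simp
qed

lemma frac_filtration_mult: assumes "x \<in> frac_filtration k" "y \<in> frac_filtration l"
  shows "x \<otimes>\<^bsub>B\<^esub> y \<in> frac_filtration (k + l)"
proof -
  obtain f s g t where h: "f \<in> NCF A k" "s \<in> S" "x = \<phi> f \<otimes>\<^bsub>B\<^esub> inv_phi s"
    "g \<in> NCF A l" "t \<in> S" "y = \<phi> g \<otimes>\<^bsub>B\<^esub> inv_phi t" using assms unfolding frac_filtration_def by blast
  obtain g' s' where g': "g' \<in> NCF A l" "s' \<in> S" "inv_phi s \<otimes>\<^bsub>B\<^esub> \<phi> g = \<phi> g' \<otimes>\<^bsub>B\<^esub> inv_phi s'"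
    using inv_phi_mult_swap[OF ideal_subspace_NCF h(4,2)] by blast
  have c: "f \<in> carrier A" "g \<in> carrier A" "g' \<in> carrier A" using h g' NCF_subset_carrier by auto
  have "x \<otimes>\<^bsub>B\<^esub> y = \<phi> f \<otimes>\<^bsub>B\<^esub> (inv_phi s \<otimes>\<^bsub>B\<^esub> \<phi> g) \<otimes>\<^bsub>B\<^esub> inv_phi t" using h c by (simp add: B.m_assoc)
  also have "\<dots> = \<phi> (f \<otimes> g') \<otimes>\<^bsub>B\<^esub> inv_phi (t \<otimes> s')" using g' h c by (simp add: inv_phi_mult phi_mult B.m_assoc)
  finally show ?thesis using frac_filtration_fraction NCF_mult h g' mult_S by simp
qed

lemma frac_filtration_a_inv: "x \<in> frac_filtration k \<Longrightarrow> \<ominus>\<^bsub>B\<^esub> x \<in> frac_filtration k"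
  using B.subspaceD(5)[OF subspace_frac_filtration] .

lemma comm_inv_phi: assumes "t \<in> S" "w \<in> carrier B"
  shows "comm B (inv_phi t) w = \<ominus>\<^bsub>B\<^esub> (inv_phi t \<otimes>\<^bsub>B\<^esub> comm B (\<phi> t) w \<otimes>\<^bsub>B\<^esub> inv_phi t)"
proof -
  have c: "\<phi> t \<in> carrier B" "inv_phi t \<in> carrier B" using assms S_carrier by auto
  have "inv_phi t \<otimes>\<^bsub>B\<^esub> comm B (\<phi> t) w \<otimes>\<^bsub>B\<^esub> inv_phi t =
      (inv_phi t \<otimes>\<^bsub>B\<^esub> \<phi> t) \<otimes>\<^bsub>B\<^esub> w \<otimes>\<^bsub>B\<^esub> inv_phi t \<ominus>\<^bsub>B\<^esub> inv_phi t \<otimes>\<^bsub>B\<^esub> w \<otimes>\<^bsub>B\<^esub> (\<phi> t \<otimes>\<^bsub>B\<^esub> inv_phi t)"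
    unfolding comm_def using c assms(2) by algebra
  also have "\<dots> = w \<otimes>\<^bsub>B\<^esub> inv_phi t \<ominus>\<^bsub>B\<^esub> inv_phi t \<otimes>\<^bsub>B\<^esub> w" using assms c by simp
  finally have e: "inv_phi t \<otimes>\<^bsub>B\<^esub> comm B (\<phi> t) w \<otimes>\<^bsub>B\<^esub> inv_phi t = w \<otimes>\<^bsub>B\<^esub> inv_phi t \<ominus>\<^bsub>B\<^esub> inv_phi t \<otimes>\<^bsub>B\<^esub> w" .
  have "comm B (inv_phi t) w = \<ominus>\<^bsub>B\<^esub> (w \<otimes>\<^bsub>B\<^esub> inv_phi t \<ominus>\<^bsub>B\<^esub> inv_phi t \<otimes>\<^bsub>B\<^esub> w)"
    unfolding comm_def using c assms(2) by algebra
  then show ?thesis using e by simp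
qed

lemma comm_phi_frac_filtration: assumes "y \<in> carrier B" "f \<in> NCF A k"
  shows "comm B y (\<phi> f) \<in> frac_filtration (Suc k)"
proof -
  obtain a t where h: "a \<in> carrier A" "t \<in> S" "y = \<phi> a \<otimes>\<^bsub>B\<^esub> inv_phi t" using fraction_repr assms(1) by blast
  have c: "f \<in> carrier A" "t \<in> carrier A" using assms h NCF_closed S_carrier by auto
  have cb: "\<phi> a \<in> carrier B" "\<phi> f \<in> carrier B" "inv_phi t \<in> carrier B" "\<phi> t \<in> carrier B" using c h by auto
  have g1: "comm B (\<phi> a) (\<phi> f) \<in> frac_filtration (Suc k)"
    using phi_comm[OF h(1) c(1)] frac_filtration_phi[OF comm_NCF[OF h(1) assms(2)]] by simp
  have g2: "comm B (\<phi> t) (\<phi> f) \<in> frac_filtration (Suc k)"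
    using phi_comm[OF c(2) c(1)] frac_filtration_phi[OF comm_NCF[OF c(2) assms(2)]] by simp
  have g3: "comm B (inv_phi t) (\<phi> f) \<in> frac_filtration (Suc k)"
  proof -
    have "inv_phi t \<otimes>\<^bsub>B\<^esub> comm B (\<phi> t) (\<phi> f) \<in> frac_filtration (0 + Suc k)"
      using frac_filtration_mult carrier_subset_frac_filtration_0 g2 cb by blast
    then have "inv_phi t \<otimes>\<^bsub>B\<^esub> comm B (\<phi> t) (\<phi> f) \<otimes>\<^bsub>B\<^esub> inv_phi t \<in> frac_filtration (Suc k + 0)"
      using frac_filtration_mult[OF _ subsetD[OF carrier_subset_frac_filtration_0 cb(3)]] by simp
    then show ?thesis using comm_inv_phi[OF h(2) cb(2)] frac_filtration_a_inv by simp
  qed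
  have "comm B y (\<phi> f) = \<phi> a \<otimes>\<^bsub>B\<^esub> comm B (inv_phi t) (\<phi> f) \<oplus>\<^bsub>B\<^esub> comm B (\<phi> a) (\<phi> f) \<otimes>\<^bsub>B\<^esub> inv_phi t"
    unfolding h(3) comm_def using cb by algebra
  moreover have "\<phi> a \<otimes>\<^bsub>B\<^esub> comm B (inv_phi t) (\<phi> f) \<in> frac_filtration (0 + Suc k)"
    using frac_filtration_mult[OF subsetD[OF carrier_subset_frac_filtration_0 cb(1)] g3] .
  moreover have "comm B (\<phi> a) (\<phi> f) \<otimes>\<^bsub>B\<^esub> inv_phi t \<in> frac_filtration (Suc k + 0)"
    using frac_filtration_mult[OF g1 subsetD[OF carrier_subset_frac_filtration_0 cb(3)]] .
  ultimately show ?thesis using B.subspaceD(3)[OF subspace_frac_filtration] by simp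
qed

lemma comm_inv_phi_frac_filtration: assumes "y \<in> carrier B" "t \<in> S"
  shows "comm B y (inv_phi t) \<in> frac_filtration 1"
proof -
  have c: "t \<in> carrier A" using assms S_carrier by auto
  have cb: "\<phi> t \<in> carrier B" "inv_phi t \<in> carrier B" using c assms by auto
  have "inv_phi t \<otimes>\<^bsub>B\<^esub> comm B (\<phi> t) y \<otimes>\<^bsub>B\<^esub> inv_phi t =
      (inv_phi t \<otimes>\<^bsub>B\<^esub> \<phi> t) \<otimes>\<^bsub>B\<^esub> y \<otimes>\<^bsub>B\<^esub> inv_phi t \<ominus>\<^bsub>B\<^esub> inv_phi t \<otimes>\<^bsub>B\<^esub> y \<otimes>\<^bsub>B\<^esub> (\<phi> t \<otimes>\<^bsub>B\<^esub> inv_phi t)"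
    unfolding comm_def using cb assms(1) by algebra
  also have "\<dots> = comm B y (inv_phi t)" unfolding comm_def using assms cb by simp
  finally have e: "comm B y (inv_phi t) = inv_phi t \<otimes>\<^bsub>B\<^esub> comm B (\<phi> t) y \<otimes>\<^bsub>B\<^esub> inv_phi t" by simp
  have "comm B (\<phi> t) y = \<ominus>\<^bsub>B\<^esub> comm B y (\<phi> t)" unfolding comm_def using cb assms(1) by algebra
  moreover have "comm B y (\<phi> t) \<in> frac_filtration (Suc 0)"
    using comm_phi_frac_filtration[OF assms(1) carrier_in_NCF_0[OF c]] .
  ultimately have g: "comm B (\<phi> t) y \<in> frac_filtration 1" using frac_filtration_a_inv by simp
  have "inv_phi t \<otimes>\<^bsub>B\<^esub> comm B (\<phi> t) y \<in> frac_filtration (0 + 1)"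
    using frac_filtration_mult[OF subsetD[OF carrier_subset_frac_filtration_0 cb(2)] g] .
  then have "inv_phi t \<otimes>\<^bsub>B\<^esub> comm B (\<phi> t) y \<otimes>\<^bsub>B\<^esub> inv_phi t \<in> frac_filtration (1 + 0)"
    using frac_filtration_mult[OF _ subsetD[OF carrier_subset_frac_filtration_0 cb(2)]] by simp
  then show ?thesis using e by simp
qed

lemma comm_frac_filtration: assumes "y \<in> carrier B" "z \<in> frac_filtration k"
  shows "comm B y z \<in> frac_filtration (Suc k)"
proof -
  obtain f s where h: "f \<in> NCF A k" "s \<in> S" "z = \<phi> f \<otimes>\<^bsub>B\<^esub> inv_phi s"
    using assms unfolding frac_filtration_def by blast
  have cb: "\<phi> f \<in> carrier B" "inv_phi s \<in> carrier B" using h NCF_closed by auto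
  have e: "comm B y z = comm B y (\<phi> f) \<otimes>\<^bsub>B\<^esub> inv_phi s \<oplus>\<^bsub>B\<^esub> \<phi> f \<otimes>\<^bsub>B\<^esub> comm B y (inv_phi s)"
    using B.comm_mult_right[OF assms(1) cb] h by simp
  have "comm B y (\<phi> f) \<otimes>\<^bsub>B\<^esub> inv_phi s \<in> frac_filtration (Suc k + 0)"
    using frac_filtration_mult[OF comm_phi_frac_filtration[OF assms(1) h(1)]
        subsetD[OF carrier_subset_frac_filtration_0 cb(2)]] .
  moreover have "\<phi> f \<otimes>\<^bsub>B\<^esub> comm B y (inv_phi s) \<in> frac_filtration (k + 1)"
    using frac_filtration_mult[OF frac_filtration_phi[OF h(1)] comm_inv_phi_frac_filtration[OF assms(1) h(2)]] .
  ultimately show ?thesis using e B.subspaceD(3)[OF subspace_frac_filtration] by simp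
qed

lemma nc_nilpotent_B: "nc_nilpotent B"
proof -
  have "NCF B N \<subseteq> frac_filtration N"
    by (rule B.NCF_least[OF subspace_frac_filtration carrier_subset_frac_filtration_0 frac_filtration_mult
      comm_frac_filtration])
  then have "NCF B N \<subseteq> {\<zero>\<^bsub>B\<^esub>}" using frac_filtration_N_trivial by blast
  moreover have "\<zero>\<^bsub>B\<^esub> \<in> NCF B N" using B.subspaceD(2)[OF B.subspace_NCF] .
  ultimately show ?thesis unfolding nc_nilpotent_def by blast
qed

lemma lprod_S: "set hs \<subseteq> S \<Longrightarrow> lprod A hs \<in> S"
  by (induction hs) (auto simp: one_S mult_S)

lemma frac_filtration_pow: "x \<in> frac_filtration 1 \<Longrightarrow> x [^]\<^bsub>B\<^esub> (n::nat) \<in> frac_filtration n"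
proof (induction n)
  case 0 then show ?case using carrier_subset_frac_filtration_0 by auto
next
  case (Suc n) then show ?case using frac_filtration_mult[of "x [^]\<^bsub>B\<^esub> n" n x 1] by simp
qed

text \<open>Write \<open>\<phi> s = \<phi> s\<^sub>0 (1 - q)\<close> with \<open>q = - \<phi>(s\<^sub>0)\<^sup>-\<^sup>1 \<phi> m\<close>. As \<open>q\<close> lies in
  \<open>frac_filtration 1\<close>, it is nilpotent and \<open>1 - q\<close> is inverted by a finite geometric series.\<close>
lemma inv_phi_add_NCF_1:
  assumes s: "s \<in> S" and s0: "s0 \<in> S" and m: "m \<in> NCF A 1" and s_eq: "s = m \<oplus> s0"
  shows "inv_phi s = geom_sum B (\<ominus>\<^bsub>B\<^esub> (inv_phi s0 \<otimes>\<^bsub>B\<^esub> \<phi> m)) N \<otimes>\<^bsub>B\<^esub> inv_phi s0"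
proof -
  define q where "q = \<ominus>\<^bsub>B\<^esub> (inv_phi s0 \<otimes>\<^bsub>B\<^esub> \<phi> m)"
  have mc: "m \<in> carrier A" and s0c: "s0 \<in> carrier A" using m s0 NCF_closed S_carrier by auto
  have qc: "q \<in> carrier B" unfolding q_def using s0 mc by simp
  have "q \<in> frac_filtration 1" unfolding q_def
    using frac_filtration_a_inv frac_filtration_mult[OF subsetD[OF carrier_subset_frac_filtration_0
      inv_phi_closed[OF s0]]
        frac_filtration_phi[OF m]] by simp
  then have qN: "q [^]\<^bsub>B\<^esub> N = \<zero>\<^bsub>B\<^esub>" using frac_filtration_pow[of q N] frac_filtration_N_trivial by auto
  have gc: "geom_sum B q N \<in> carrier B" using B.geom_sum_closed qc by simp
  have ps: "\<phi> s = \<phi> s0 \<otimes>\<^bsub>B\<^esub> (\<one>\<^bsub>B\<^esub> \<ominus>\<^bsub>B\<^esub> q)"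
  proof -
    have "\<one>\<^bsub>B\<^esub> \<ominus>\<^bsub>B\<^esub> q = \<one>\<^bsub>B\<^esub> \<oplus>\<^bsub>B\<^esub> inv_phi s0 \<otimes>\<^bsub>B\<^esub> \<phi> m"
      unfolding q_def using s0 mc by (simp add: B.minus_eq)
    then have "\<phi> s0 \<otimes>\<^bsub>B\<^esub> (\<one>\<^bsub>B\<^esub> \<ominus>\<^bsub>B\<^esub> q) = \<phi> s0 \<oplus>\<^bsub>B\<^esub> \<phi> m"
      using s0c mc s0 by (simp add: B.r_distr)
    then show ?thesis using s_eq mc s0c by (simp add: phi_add B.a_comm)
  qed
  have "\<phi> s \<otimes>\<^bsub>B\<^esub> (geom_sum B q N \<otimes>\<^bsub>B\<^esub> inv_phi s0)
      = \<phi> s0 \<otimes>\<^bsub>B\<^esub> ((\<one>\<^bsub>B\<^esub> \<ominus>\<^bsub>B\<^esub> q) \<otimes>\<^bsub>B\<^esub> geom_sum B q N) \<otimes>\<^bsub>B\<^esub> inv_phi s0"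
    unfolding ps using s0c s0 qc gc by (simp add: B.m_assoc)
  also have "\<dots> = \<one>\<^bsub>B\<^esub>" using B.one_minus_mult_geom_sum[OF qc, of N] qN s0c s0 by (simp add: B.minus_eq)
  finally have e: "\<phi> s \<otimes>\<^bsub>B\<^esub> (geom_sum B q N \<otimes>\<^bsub>B\<^esub> inv_phi s0) = \<one>\<^bsub>B\<^esub>" .
  have "inv_phi s = inv_phi s \<otimes>\<^bsub>B\<^esub> (\<phi> s \<otimes>\<^bsub>B\<^esub> (geom_sum B q N \<otimes>\<^bsub>B\<^esub> inv_phi s0))"
    using e s by simp
  also have "\<dots> = geom_sum B q N \<otimes>\<^bsub>B\<^esub> inv_phi s0"
    using s s0 S_carrier gc by (simp add: B.m_assoc[symmetric])
  finally show ?thesis unfolding q_def .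
qed

lemma phi_in_cspan_monomials:
  assumes GA: "GA \<subseteq> carrier A" "carrier A = cspan A (monomials GA)"
    and \<Gamma>: "\<phi> ` GA \<subseteq> \<Gamma>" "\<Gamma> \<subseteq> carrier B" and a: "a \<in> carrier A"
  shows "\<phi> a \<in> cspan B (B.monomials \<Gamma>)"
proof -
  note T = B.subspaceD[OF B.subspace_cspan[OF B.monomials_subset[OF \<Gamma>(2)]]]
  have sub: "subspace {a \<in> carrier A. \<phi> a \<in> cspan B (B.monomials \<Gamma>)}"
    unfolding subspace_def using T by (auto simp: phi_add phi_smult)
  have gen: "\<phi> y \<in> cspan B (B.monomials \<Gamma>)" if y: "y \<in> monomials GA" for y
  proof -
    obtain xs where xs: "y = lprod A xs" "set xs \<subseteq> GA" using y unfolding monomials_def by blast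
    have "\<phi> y = lprod B (map \<phi> xs)" using ring_hom_lprod[OF hom_phi is_monoid B.is_monoid] xs GA by auto
    moreover have "lprod B (map \<phi> xs) \<in> B.monomials \<Gamma>" unfolding B.monomials_def using xs \<Gamma>(1)
      by (intro CollectI exI[of _ "map \<phi> xs"]) auto
    ultimately show ?thesis using B.cspan_superset by auto
  qed
  have "a \<in> cspan A (monomials GA)" using a GA by auto
  then show ?thesis by (rule cspan_induct[OF _ monomials_subset[OF GA(1)] sub]) (use gen in auto)
qed

lemma fg_algebra_B: assumes fgA: "fg_algebra A" and H: "finite H" "H \<subseteq> S"
  and dec: "\<forall>s\<in>S. \<exists>hs m. set hs \<subseteq> H \<and> m \<in> NCF A 1 \<and> s = m \<oplus> lprod A hs"
  shows "fg_algebra B"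
proof -
  obtain GA where GA: "finite GA" "GA \<subseteq> carrier A" "carrier A = cspan A (monomials GA)"
    using fgA unfolding fg_algebra_def monomials_def by blast
  define \<Gamma> where "\<Gamma> = \<phi> ` GA \<union> inv_phi ` H"
  have \<Gamma>f: "finite \<Gamma>" using GA H unfolding \<Gamma>_def by auto
  have \<Gamma>c: "\<Gamma> \<subseteq> carrier B" using GA H S_carrier unfolding \<Gamma>_def by auto
  define T where "T = cspan B (B.monomials \<Gamma>)"
  note Tsub = B.subspace_cspan[OF B.monomials_subset[OF \<Gamma>c], folded T_def]
  have Tm: "x \<in> T \<Longrightarrow> y \<in> T \<Longrightarrow> x \<otimes>\<^bsub>B\<^esub> y \<in> T" for x y using B.cspan_monomials_mult[OF \<Gamma>c] T_def by simp
  have T1: "\<one>\<^bsub>B\<^esub> \<in> T" using B.cspan_monomials_one T_def by simp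
  have Tg: "g \<in> \<Gamma> \<Longrightarrow> g \<in> T" for g using B.cspan_monomials_gen[OF \<Gamma>c] T_def by simp
  have phiT: "\<phi> a \<in> T" if "a \<in> carrier A" for a
    unfolding T_def using phi_in_cspan_monomials[OF GA(2,3) _ \<Gamma>c that] \<Gamma>_def by blast
  have inv_lprod_T: "inv_phi (lprod A hs) \<in> T" if "set hs \<subseteq> H" for hs
    using that
  proof (induction hs)
    case Nil then show ?case using T1 by simp
  next
    case (Cons h hs)
    have hS: "h \<in> S" "lprod A hs \<in> S" using Cons H lprod_S by auto
    have "inv_phi (lprod A (h # hs)) = inv_phi (lprod A hs) \<otimes>\<^bsub>B\<^esub> inv_phi h" using inv_phi_mult hS by simp
    moreover have "inv_phi h \<in> T" using Tg Cons unfolding \<Gamma>_def by auto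
    ultimately show ?case using Tm Cons by auto
  qed
  have inv_T: "inv_phi s \<in> T" if s: "s \<in> S" for s
  proof -
    obtain hs m where d: "set hs \<subseteq> H" "m \<in> NCF A 1" "s = m \<oplus> lprod A hs" using dec s by blast
    have s0: "lprod A hs \<in> S" using lprod_S d H by auto
    have "\<ominus>\<^bsub>B\<^esub> (inv_phi (lprod A hs) \<otimes>\<^bsub>B\<^esub> \<phi> m) \<in> T"
      using B.subspaceD(5)[OF Tsub] Tm inv_lprod_T[OF d(1)] phiT[OF NCF_closed[OF d(2)]] by simp
    then have "geom_sum B (\<ominus>\<^bsub>B\<^esub> (inv_phi (lprod A hs) \<otimes>\<^bsub>B\<^esub> \<phi> m)) N \<in> T"
      unfolding T_def by (rule B.cspan_monomials_geom_sum[OF \<Gamma>c])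
    then show ?thesis using inv_phi_add_NCF_1[OF s s0 d(2,3)] Tm inv_lprod_T[OF d(1)] by simp
  qed
  have "carrier B \<subseteq> T"
  proof
    fix y assume "y \<in> carrier B"
    then obtain a s where "a \<in> carrier A" "s \<in> S" "y = \<phi> a \<otimes>\<^bsub>B\<^esub> inv_phi s" using fraction_repr by blast
    then show "y \<in> T" using Tm phiT inv_T by simp
  qed
  moreover have "T \<subseteq> carrier B" using B.subspaceD(1)[OF Tsub] .
  ultimately have "carrier B = cspan B {lprod B xs | xs. set xs \<subseteq> \<Gamma>}" unfolding T_def B.monomials_def by blast
  then show ?thesis unfolding fg_algebra_def using \<Gamma>f \<Gamma>c by blast
qed

end

section \<open>Multiplicative sets in a quotient algebra\<close>

context ideal
begin

lemma fg_mult_set_preimage_submonoid: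
  assumes "fg_mult_set (R Quot I) T"
  shows "\<one> \<in> {a \<in> carrier R. I +> a \<in> T}"
    and "\<lbrakk>s \<in> {a \<in> carrier R. I +> a \<in> T}; t \<in> {a \<in> carrier R. I +> a \<in> T}\<rbrakk>
      \<Longrightarrow> s \<otimes> t \<in> {a \<in> carrier R. I +> a \<in> T}"
proof -
  obtain G where G: "G \<subseteq> carrier (R Quot I)" "T = {lprod (R Quot I) xs | xs. set xs \<subseteq> G}"
    using assms unfolding fg_mult_set_def by blast
  have Q: "monoid (R Quot I)" using ring.is_monoid[OF quotient_is_ring] .
  have "lprod (R Quot I) [] \<in> T" unfolding G(2) by auto
  then show "\<one> \<in> {a \<in> carrier R. I +> a \<in> T}"
    by (simp add: lprod_def FactRing_def)
  assume s: "s \<in> {a \<in> carrier R. I +> a \<in> T}" and t: "t \<in> {a \<in> carrier R. I +> a \<in> T}"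
  obtain xs where xs: "set xs \<subseteq> G" "I +> s = lprod (R Quot I) xs" using s G(2) by auto
  obtain ys where ys: "set ys \<subseteq> G" "I +> t = lprod (R Quot I) ys" using t G(2) by auto
  note st = s[THEN CollectD, THEN conjunct1] t[THEN CollectD, THEN conjunct1] xs(1) ys(1) xs(2) ys(2)
  have "I +> (s \<otimes> t) = (I +> s) \<otimes>\<^bsub>R Quot I\<^esub> (I +> t)"
    using rcoset_mult_add[OF st(1,2)] by (simp add: FactRing_def)
  also have "\<dots> = lprod (R Quot I) (xs @ ys)"
    using monoid.lprod_append[OF Q, of xs ys] st(3-6) G(1) by (simp add: subset_trans)
  finally have "I +> (s \<otimes> t) \<in> T" unfolding G(2) using st(3,4) by (auto intro!: exI[of _ "xs @ ys"])
  then show "s \<otimes> t \<in> {a \<in> carrier R. I +> a \<in> T}" using st(1,2) by simp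
qed

lemma fg_mult_set_preimage_decomp:
  assumes "fg_mult_set (R Quot I) T"
  shows "\<exists>H. finite H \<and> H \<subseteq> {a \<in> carrier R. I +> a \<in> T} \<and>
    (\<forall>s \<in> {a \<in> carrier R. I +> a \<in> T}. \<exists>hs m. set hs \<subseteq> H \<and> m \<in> I \<and> s = m \<oplus> lprod R hs)"
proof -
  obtain G where G: "finite G" "G \<subseteq> carrier (R Quot I)" "T = {lprod (R Quot I) xs | xs. set xs \<subseteq> G}"
    using assms unfolding fg_mult_set_def by blast
  have Q: "monoid (R Quot I)" using ring.is_monoid[OF quotient_is_ring] .
  define lift where "lift C = (SOME a. a \<in> carrier R \<and> C = I +> a)" for C
  have lift: "lift C \<in> carrier R \<and> C = I +> lift C" if "C \<in> carrier (R Quot I)" for C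
  proof -
    have "\<exists>a. a \<in> carrier R \<and> C = I +> a" using that unfolding FactRing_def A_RCOSETS_def' by auto
    then show ?thesis unfolding lift_def by (rule someI_ex)
  qed
  have lift_in: "lift C \<in> {a \<in> carrier R. I +> a \<in> T}" if "C \<in> G" for C
  proof -
    have C: "C \<in> carrier (R Quot I)" using that G(2) by blast
    have "lprod (R Quot I) [C] \<in> T" unfolding G(3) using that by (auto intro!: exI[of _ "[C]"])
    moreover have "lprod (R Quot I) [C] = C"
      using C by (simp add: monoid.lprod_Cons[OF Q] monoid.lprod_Nil[OF Q] monoid.r_one[OF Q])
    ultimately show ?thesis using lift[OF C] by simp
  qed
  have "\<exists>hs m. set hs \<subseteq> lift ` G \<and> m \<in> I \<and> s = m \<oplus> lprod R hs"
    if s: "s \<in> {a \<in> carrier R. I +> a \<in> T}" for s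
  proof -
    obtain xs where xs: "I +> s = lprod (R Quot I) xs" "set xs \<subseteq> G" using s G(3) by auto
    define hs where "hs = map lift xs"
    have hs: "set hs \<subseteq> lift ` G" "set hs \<subseteq> carrier R" using xs(2) lift_in unfolding hs_def by auto
    have "I +> lprod R hs = lprod (R Quot I) (map (\<lambda>a. I +> a) hs)"
      using ring_hom_lprod[OF rcos_ring_hom is_monoid Q hs(2)] .
    also have "map (\<lambda>a. I +> a) hs = xs"
      unfolding hs_def map_map using xs(2) G(2) lift by (intro map_idI) (auto simp: subset_iff)
    finally have "I +> s = I +> lprod R hs" using xs(1) by simp
    then have "s \<in> I +> lprod R hs" using a_rcos_self[of s] s by simp
    then obtain m where "m \<in> I" "s = m \<oplus> lprod R hs" unfolding a_r_coset_def' by blast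
    then show ?thesis using hs(1) by blast
  qed
  moreover have "lift ` G \<subseteq> {a \<in> carrier R. I +> a \<in> T}" using lift_in by blast
  ultimately show ?thesis using G(1) by (intro exI[of _ "lift ` G"]) auto
qed

end

theorem proposition2p5:
  fixes A :: "(complex, 'a) module" and Sbar :: "'a set set"
  assumes "cx_algebra A" and "fg_algebra A" and "nc_nilpotent A"
    and "Sbar \<subseteq> carrier (A Quot Mc A 2)"
    and "fg_mult_set (A Quot Mc A 2) Sbar"
    and "no_zero_divisors_in (A Quot Mc A 2) Sbar"
  shows "right_ore A {a \<in> carrier A. Mc A 2 +>\<^bsub>A\<^esub> a \<in> Sbar}
    \<and> (\<exists>(B :: (complex, ('a \<times> 'a) set) module) \<phi>.
          ore_localization A {a \<in> carrier A. Mc A 2 +>\<^bsub>A\<^esub> a \<in> Sbar} B \<phi>)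
    \<and> (\<forall>(B :: (complex, 'b) module) \<phi>.
          ore_localization A {a \<in> carrier A. Mc A 2 +>\<^bsub>A\<^esub> a \<in> Sbar} B \<phi>
          \<longrightarrow> fg_algebra B \<and> nc_nilpotent B)"
proof -
  interpret complex_algebra A by (rule complex_algebraI[OF assms(1)])
  obtain N where "NCF A N = {\<zero>\<^bsub>A\<^esub>}" using assms(3) unfolding nc_nilpotent_def by blast
  then interpret nilpotent_algebra A N
    by (simp add: nilpotent_algebra_def nilpotent_algebra_axioms_def complex_algebra_axioms)
  interpret I: ideal "Mc A 2" A by (rule ideal_Mc)
  define S where "S = {a \<in> carrier A. Mc A 2 +>\<^bsub>A\<^esub> a \<in> Sbar}"
  have "S \<subseteq> carrier A" unfolding S_def by blast
  note S = this I.fg_mult_set_preimage_submonoid[OF assms(5), folded S_def]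
  interpret D: right_denominator_set A S by (rule submonoid_right_denominator_set[OF S])
  obtain H where H: "finite H" "H \<subseteq> S"
    and decomp: "\<forall>s\<in>S. \<exists>hs m. set hs \<subseteq> H \<and> m \<in> Mc A 2 \<and> s = m \<oplus>\<^bsub>A\<^esub> lprod A hs"
    using I.fg_mult_set_preimage_decomp[OF assms(5), folded S_def] by blast
  have "right_ore A S" unfolding right_ore_def using D.ore_condition by blast
  moreover have "ore_localization A S D.Frac D.frac_of" by (rule D.ore_localization_Frac)
  moreover have "fg_algebra B \<and> nc_nilpotent B" if "ore_localization A S (B :: (complex, 'b) module) \<phi>"
    for B \<phi>
  proof -
    interpret L: localization_of_nilpotent A N S B \<phi>
      by (intro localization_of_nilpotent.intro localization_of_nilpotent_axioms.intro
          nilpotent_algebra_axioms that S)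
    have "\<forall>s\<in>S. \<exists>hs m. set hs \<subseteq> H \<and> m \<in> NCF A 1 \<and> s = m \<oplus>\<^bsub>A\<^esub> lprod A hs"
      using decomp Mc_2_in_NCF_1 by blast
    then show ?thesis using L.nc_nilpotent_B L.fg_algebra_B[OF assms(2) H] by blast
  qed
  ultimately show ?thesis unfolding S_def by blast
qed

end
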